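(* Let $H$ be a Hamiltonian on a finite-dimensional Hilbert space $\mathcal{H}$, $\rho_\beta=e^{-\beta H}/\mathrm{Tr}[e^{-\beta H}]$, and let $\{\mathcal{L}_\delta\}_{\delta\ge0}$ be a family of primitive Lindbladians, each KMS-symmetric with respect to $\rho_\beta$ (hence all with fixed point $\rho_\beta$). For $X,Y$ self-adjoint put $X(s)=e^{isH}Xe^{-isH}$ and $\mathcal{E}^{(\delta)}_{XY}(s):=-\langle Y(s\beta),\mathcal{L}^\dagger_\delta(X(s\beta))\rangle_{\rho_\beta}$. Assume that for all self-adjoint $X,Y$ there is a function $\mathcal{E}^{(\infty)}_{XY}:\mathbb{R}\to\mathbb{C}$ with $\mathcal{E}^{(\delta)}_{XY}=f_\delta\star\mathcal{E}^{(\infty)}_{XY}$ for every $\delta$, where $f_\delta:\mathbb{R}\to\mathbb{R}_+$ are integrable functions satisfying the semigroup property: for any $\delta\le\delta'$ there is $g_{\delta,\delta'}:\mathbb{R}\to\mathbb{R}_+$ with $f_\delta=g_{\delta,\delta'}\star f_{\delta'}$. Then for all $\delta\le\delta'$, $$\lambda_{\mathrm{Gap}}(\mathcal{L}_\delta)\ge\|g_{\delta,\delta'}\|_1\,\lambda_{\mathrm{Gap}}(\mathcal{L}_{\delta'})\quad\text{and}\quad \alpha_{\mathrm{MLSI}}(\mathcal{L}_\delta)\ge\|g_{\delta,\delta'}\|_1\,\alpha_{\mathrm{MLSI}}(\mathcal{L}_{\delta'}).$$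
   Context: $(f\star h)(s)=\int_{\mathbb{R}}f(r)h(s-r)dr$. KMS inner product $\langle X,Y\rangle_{\rho_\beta}=\mathrm{Tr}[\rho_\beta^{1/2}X^\dagger\rho_\beta^{1/2}Y]$, $\|X\|^2_{\rho_\beta}=\langle X,X\rangle_{\rho_\beta}$; $\mathcal{L}$ is KMS-symmetric if $\mathcal{L}^\dagger$ is self-adjoint for this inner product. Spectral gap: $\lambda_{\mathrm{Gap}}(\mathcal{L})=\inf_{X=X^\dagger}\frac{-\langle X,\mathcal{L}^\dagger(X)\rangle_{\rho_\beta}}{\|X-\langle\mathbb{I},X\rangle_{\rho_\beta}\mathbb{I}\|^2_{\rho_\beta}}$. MLSI constant: $\alpha_{\mathrm{MLSI}}(\mathcal{L})=\inf_{\sigma}\frac{\mathrm{EP}(\sigma)}{D(\sigma\|\rho_\beta)}$ over states $\sigma$, where $D(\sigma\|\rho_\beta)=\mathrm{Tr}[\sigma(\log\sigma-\log\rho_\beta)]$ and $\mathrm{EP}(\sigma)=-\mathrm{Tr}[\mathcal{L}(\sigma)(\log\sigma-\log\rho_\beta)]$. *)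

theory Defs
  imports "HOL-Analysis.Analysis" "Jordan_Normal_Form.Matrix"
begin

definition adj :: "complex mat \<Rightarrow> complex mat" where
  "adj A = Matrix.mat (dim_col A) (dim_row A) (\<lambda>(i,j). cnj (A $$ (j,i)))"

definition mtrace :: "complex mat \<Rightarrow> complex" where
  "mtrace A = (\<Sum>i<dim_row A. A $$ (i,i))"

definition hermitian :: "nat \<Rightarrow> complex mat \<Rightarrow> bool" where
  "hermitian n A \<longleftrightarrow> A \<in> carrier_mat n n \<and> adj A = A"

definition unitary :: "nat \<Rightarrow> complex mat \<Rightarrow> bool" where
  "unitary n U \<longleftrightarrow> U \<in> carrier_mat n n \<and> adj U * U = 1\<^sub>m n \<and> U * adj U = 1\<^sub>m n"

text \<open>Functional calculus of a Hermitian matrix via its spectral decomposition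
  A = U diag(d) U^dagger (independent of the chosen decomposition).\<close>
definition matfun :: "nat \<Rightarrow> (real \<Rightarrow> complex) \<Rightarrow> complex mat \<Rightarrow> complex mat" where
  "matfun n f A = (SOME B. \<exists>U (d::nat \<Rightarrow> real). unitary n U
      \<and> A = U * mat_diag n (\<lambda>i. complex_of_real (d i)) * adj U
      \<and> B = U * mat_diag n (\<lambda>i. f (d i)) * adj U)"

definition psd :: "nat \<Rightarrow> complex mat \<Rightarrow> bool" where
  "psd n A \<longleftrightarrow> hermitian n A \<and>
     (\<forall>v \<in> carrier_vec n. 0 \<le> Re (conjugate v \<bullet> (A *\<^sub>v v)))"

definition posdef :: "nat \<Rightarrow> complex mat \<Rightarrow> bool" where
  "posdef n A \<longleftrightarrow> hermitian n A \<and>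
     (\<forall>v \<in> carrier_vec n. v \<noteq> 0\<^sub>v n \<longrightarrow> 0 < Re (conjugate v \<bullet> (A *\<^sub>v v)))"

definition density :: "nat \<Rightarrow> complex mat \<Rightarrow> bool" where
  "density n \<sigma> \<longleftrightarrow> psd n \<sigma> \<and> mtrace \<sigma> = 1"

definition gibbs :: "nat \<Rightarrow> real \<Rightarrow> complex mat \<Rightarrow> complex mat" where
  "gibbs n \<beta> H = (1 / mtrace (matfun n (\<lambda>x. complex_of_real (exp (- \<beta> * x))) H))
      \<cdot>\<^sub>m matfun n (\<lambda>x. complex_of_real (exp (- \<beta> * x))) H"

definition msqrt :: "nat \<Rightarrow> complex mat \<Rightarrow> complex mat" where
  "msqrt n A = matfun n (\<lambda>x. complex_of_real (sqrt x)) A"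

definition mlog :: "nat \<Rightarrow> complex mat \<Rightarrow> complex mat" where
  "mlog n A = matfun n (\<lambda>x. complex_of_real (ln x)) A"

definition kms :: "nat \<Rightarrow> complex mat \<Rightarrow> complex mat \<Rightarrow> complex mat \<Rightarrow> complex" where
  "kms n \<rho> X Y = mtrace (msqrt n \<rho> * adj X * msqrt n \<rho> * Y)"

definition heis :: "nat \<Rightarrow> complex mat \<Rightarrow> real \<Rightarrow> complex mat \<Rightarrow> complex mat" where
  "heis n H s X = matfun n (\<lambda>x. exp (\<i> * complex_of_real (s * x))) H * X
                  * matfun n (\<lambda>x. exp (- \<i> * complex_of_real (s * x))) H"

definition lindbladian :: "nat \<Rightarrow> (complex mat \<Rightarrow> complex mat) \<Rightarrow> bool" where
  "lindbladian n L \<longleftrightarrow> (\<exists>K Js. hermitian n K \<and> set Js \<subseteq> carrier_mat n n \<and>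
     (\<forall>\<rho> \<in> carrier_mat n n. L \<rho> =
        (- \<i>) \<cdot>\<^sub>m (K * \<rho> - \<rho> * K) +
        foldr (\<lambda>J acc. (J * \<rho> * adj J - (1/2) \<cdot>\<^sub>m (adj J * J * \<rho> + \<rho> * (adj J * J))) + acc)
              Js (0\<^sub>m n n)))"

definition hs_adj :: "nat \<Rightarrow> (complex mat \<Rightarrow> complex mat) \<Rightarrow> complex mat \<Rightarrow> complex mat" where
  "hs_adj n L X = (THE Y. Y \<in> carrier_mat n n \<and>
      (\<forall>A \<in> carrier_mat n n. mtrace (adj Y * A) = mtrace (adj X * L A)))"

definition kms_symmetric :: "nat \<Rightarrow> complex mat \<Rightarrow> (complex mat \<Rightarrow> complex mat) \<Rightarrow> bool" where
  "kms_symmetric n \<rho> L \<longleftrightarrow> (\<forall>X \<in> carrier_mat n n. \<forall>Y \<in> carrier_mat n n.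
      kms n \<rho> X (hs_adj n L Y) = kms n \<rho> (hs_adj n L X) Y)"

definition primitive :: "nat \<Rightarrow> (complex mat \<Rightarrow> complex mat) \<Rightarrow> bool" where
  "primitive n L \<longleftrightarrow> (\<exists>!\<sigma>. density n \<sigma> \<and> L \<sigma> = 0\<^sub>m n n) \<and>
      (\<forall>\<sigma>. density n \<sigma> \<and> L \<sigma> = 0\<^sub>m n n \<longrightarrow> posdef n \<sigma>)"

section \<open>Spectral gap and MLSI constant (as extended reals; inf of empty set = \<infinity>)\<close>

definition spectral_gap :: "nat \<Rightarrow> complex mat \<Rightarrow> (complex mat \<Rightarrow> complex mat) \<Rightarrow> ereal" where
  "spectral_gap n \<rho> L = Inf { ereal (Re (- kms n \<rho> X (hs_adj n L X)) /
        Re (kms n \<rho> (X - kms n \<rho> (1\<^sub>m n) X \<cdot>\<^sub>m 1\<^sub>m n) (X - kms n \<rho> (1\<^sub>m n) X \<cdot>\<^sub>m 1\<^sub>m n)))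
      | X. hermitian n X \<and> X - kms n \<rho> (1\<^sub>m n) X \<cdot>\<^sub>m 1\<^sub>m n \<noteq> 0\<^sub>m n n }"

definition rel_entropy :: "nat \<Rightarrow> complex mat \<Rightarrow> complex mat \<Rightarrow> real" where
  "rel_entropy n \<sigma> \<rho> = Re (mtrace (\<sigma> * (mlog n \<sigma> - mlog n \<rho>)))"

definition entropy_prod :: "nat \<Rightarrow> (complex mat \<Rightarrow> complex mat) \<Rightarrow> complex mat \<Rightarrow> complex mat \<Rightarrow> real" where
  "entropy_prod n L \<rho> \<sigma> = Re (- mtrace (L \<sigma> * (mlog n \<sigma> - mlog n \<rho>)))"

definition mlsi_const :: "nat \<Rightarrow> complex mat \<Rightarrow> (complex mat \<Rightarrow> complex mat) \<Rightarrow> ereal" where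
  "mlsi_const n \<rho> L = Inf { ereal (entropy_prod n L \<rho> \<sigma> / rel_entropy n \<sigma> \<rho>)
      | \<sigma>. density n \<sigma> \<and> posdef n \<sigma> \<and> \<sigma> \<noteq> \<rho> }"

definition is_convolution :: "(real \<Rightarrow> real) \<Rightarrow> (real \<Rightarrow> complex) \<Rightarrow> (real \<Rightarrow> complex) \<Rightarrow> bool" where
  "is_convolution f h e \<longleftrightarrow> h \<in> borel_measurable lborel \<and>
     (\<forall>s. integrable lborel (\<lambda>r. complex_of_real (f r) * h (s - r)) \<and>
          e s = (LINT r|lborel. complex_of_real (f r) * h (s - r)))"

definition corr_E :: "nat \<Rightarrow> real \<Rightarrow> complex mat \<Rightarrow> (complex mat \<Rightarrow> complex mat)
      \<Rightarrow> complex mat \<Rightarrow> complex mat \<Rightarrow> real \<Rightarrow> complex" where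
  "corr_E n \<beta> H L X Y s = - kms n (gibbs n \<beta> H) (heis n H (s * \<beta>) Y)
        (hs_adj n L (heis n H (s * \<beta>) X))"

definition l1_norm :: "(real \<Rightarrow> real) \<Rightarrow> ereal" where
  "l1_norm g = enn2ereal (\<integral>\<^sup>+ r. ennreal \<bar>g r\<bar> \<partial>lborel)"

end

(*
  Both constants are infima of ratios whose numerator is a value E_XY(0) of the correlation
  function: -<X, L^dagger X> for the gap, and, by KMS symmetry, the entropy production
  EP(sigma) = E_XY(0) with X = rho^(-1/2) sigma rho^(-1/2) and Y = log sigma - log rho.
  From E^delta = f_delta * E^inf and f_delta = g * f_delta', Fubini gives
  E^delta(0) = int g(u) E^delta'(-u) du, and E^delta'_XY(-u) is the numerator for the
  Heisenberg-evolved operators X(-u beta), Y(-u beta).  Since e^(itH) commutes with rho, the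
  evolution preserves the denominators (variance, relative entropy) and the admissible sets, so
  every evolved ratio is at least the constant of L_delta'; integrating against g >= 0 yields
  the factor ||g||_1.
*)
theory Submission
  imports Defs "HOL-Computational_Algebra.Fundamental_Theorem_Algebra" "Jordan_Normal_Form.Char_Poly"
begin

lemma adj_dim [simp]: "dim_row (adj A) = dim_col A" "dim_col (adj A) = dim_row A"
  by (auto simp: adj_def)

lemma adj_index [simp]: "i < dim_col A \<Longrightarrow> j < dim_row A \<Longrightarrow> adj A $$ (i,j) = cnj (A $$ (j,i))"
  by (auto simp: adj_def)

lemma adj_carrier [simp, intro]: "A \<in> carrier_mat n m \<Longrightarrow> adj A \<in> carrier_mat m n"
  unfolding carrier_mat_def by simp

lemma adj_adj [simp]: "adj (adj A) = A"
  by (intro eq_matI) auto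

lemma mat_diag_dims [simp]: "dim_row (mat_diag n f) = n" "dim_col (mat_diag n f) = n"
  by (auto simp: mat_diag_def)

lemma mult_carrier_mat_sq [simp]:
  "A \<in> carrier_mat n n \<Longrightarrow> B \<in> carrier_mat n n \<Longrightarrow> A * B \<in> carrier_mat n n"
  by (rule mult_carrier_mat)

lemma assoc_mult_mat_sq:
  "A \<in> carrier_mat n n \<Longrightarrow> B \<in> carrier_mat n n \<Longrightarrow> C \<in> carrier_mat n n \<Longrightarrow> A * B * C = A * (B * C)"
  by (rule assoc_mult_mat)

lemma mult_inverse_cancel:
  fixes A B X :: "'a::semiring_1 mat"
  assumes "A \<in> carrier_mat n n" "B \<in> carrier_mat n n" "X \<in> carrier_mat n m" "A * B = 1\<^sub>m n"
  shows "A * (B * X) = X"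
  using assms by (simp flip: assoc_mult_mat[of A n n B n X m])

lemma index_mult_mat_sum:
  "A \<in> carrier_mat n m \<Longrightarrow> B \<in> carrier_mat m p \<Longrightarrow> i < n \<Longrightarrow> j < p \<Longrightarrow>
    (A * B) $$ (i,j) = (\<Sum>l<m. A $$ (i,l) * B $$ (l,j))"
  by (auto simp: scalar_prod_def lessThan_atLeast0 intro!: sum.cong)

lemma adj_mult:
  assumes "A \<in> carrier_mat n m" "B \<in> carrier_mat m k"
  shows "adj (A * B) = adj B * adj A"
proof (rule eq_matI)
  fix i j assume "i < dim_row (adj B * adj A)" "j < dim_col (adj B * adj A)"
  then have i: "i < k" and j: "j < n" using assms by auto
  have "adj (A * B) $$ (i,j) = (\<Sum>l<m. cnj (A $$ (j,l)) * cnj (B $$ (l,i)))"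
    using assms i j index_mult_mat_sum[OF assms j i] by simp
  also have "\<dots> = (adj B * adj A) $$ (i,j)"
    using assms i j by (subst index_mult_mat_sum[of _ k m _ n]) (auto simp: mult.commute intro!: sum.cong)
  finally show "adj (A * B) $$ (i,j) = (adj B * adj A) $$ (i,j)" .
qed (use assms in auto)

lemma adj_add: "A \<in> carrier_mat n m \<Longrightarrow> B \<in> carrier_mat n m \<Longrightarrow> adj (A + B) = adj A + adj B"
  by (intro eq_matI) auto

lemma adj_minus: "A \<in> carrier_mat n m \<Longrightarrow> B \<in> carrier_mat n m \<Longrightarrow> adj (A - B) = adj A - adj B"
  by (intro eq_matI) auto

lemma adj_smult: "adj (c \<cdot>\<^sub>m A) = cnj c \<cdot>\<^sub>m adj A"
  by (intro eq_matI) auto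

lemma adj_one [simp]: "adj (1\<^sub>m n) = 1\<^sub>m n"
  by (intro eq_matI) auto

lemma adj_zero [simp]: "adj (0\<^sub>m n m) = 0\<^sub>m m n"
  by (intro eq_matI) auto

lemma adj_mat_diag: "adj (mat_diag n f) = mat_diag n (\<lambda>i. cnj (f i))"
  by (intro eq_matI) (auto simp: mat_diag_def)

lemma mtrace_mult_comm:
  assumes "A \<in> carrier_mat n m" "B \<in> carrier_mat m n"
  shows "mtrace (A * B) = mtrace (B * A)"
proof -
  have "mtrace (A * B) = (\<Sum>i<n. \<Sum>l<m. A $$ (i,l) * B $$ (l,i))"
    unfolding mtrace_def using assms by (simp add: index_mult_mat_sum[OF assms] del: index_mult_mat(1))
  also have "\<dots> = (\<Sum>l<m. \<Sum>i<n. B $$ (l,i) * A $$ (i,l))"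
    by (subst sum.swap) (simp add: mult.commute)
  also have "\<dots> = mtrace (B * A)"
    unfolding mtrace_def using assms by (simp add: index_mult_mat_sum[OF assms(2,1)] del: index_mult_mat(1))
  finally show ?thesis .
qed

lemma mtrace_add: "A \<in> carrier_mat n n \<Longrightarrow> B \<in> carrier_mat n n \<Longrightarrow> mtrace (A + B) = mtrace A + mtrace B"
  by (auto simp: mtrace_def sum.distrib)

lemma mtrace_minus: "A \<in> carrier_mat n n \<Longrightarrow> B \<in> carrier_mat n n \<Longrightarrow> mtrace (A - B) = mtrace A - mtrace B"
  by (auto simp: mtrace_def sum_subtractf)

lemma mtrace_smult: "A \<in> carrier_mat n n \<Longrightarrow> mtrace (c \<cdot>\<^sub>m A) = c * mtrace A"
  by (auto simp: mtrace_def sum_distrib_left)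

lemma mtrace_mat_diag: "mtrace (mat_diag n f) = (\<Sum>i<n. f i)"
  by (auto simp: mtrace_def mat_diag_def)

lemma mtrace_mult_add_right:
  "X \<in> carrier_mat n n \<Longrightarrow> P \<in> carrier_mat n n \<Longrightarrow> Q \<in> carrier_mat n n \<Longrightarrow>
    mtrace (X * (P + Q)) = mtrace (X * P) + mtrace (X * Q)"
  by (simp add: mult_add_distrib_mat[of _ n n] mtrace_add[of _ n])

lemma mtrace_mult_minus_right:
  "X \<in> carrier_mat n n \<Longrightarrow> P \<in> carrier_mat n n \<Longrightarrow> Q \<in> carrier_mat n n \<Longrightarrow>
    mtrace (X * (P - Q)) = mtrace (X * P) - mtrace (X * Q)"
  by (simp add: mult_minus_distrib_mat[of _ n n] mtrace_minus[of _ n])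

lemma mtrace_mult_smult_right:
  "X \<in> carrier_mat n n \<Longrightarrow> P \<in> carrier_mat n n \<Longrightarrow> mtrace (X * (c \<cdot>\<^sub>m P)) = c * mtrace (X * P)"
  by (simp add: mult_smult_distrib[of _ n n] mtrace_smult[of _ n])

lemma mtrace_mult_add_left:
  "X \<in> carrier_mat n n \<Longrightarrow> P \<in> carrier_mat n n \<Longrightarrow> Q \<in> carrier_mat n n \<Longrightarrow>
    mtrace ((P + Q) * X) = mtrace (P * X) + mtrace (Q * X)"
  by (simp add: add_mult_distrib_mat[of _ n n] mtrace_add[of _ n])

lemma mtrace_mult_minus_left:
  "X \<in> carrier_mat n n \<Longrightarrow> P \<in> carrier_mat n n \<Longrightarrow> Q \<in> carrier_mat n n \<Longrightarrow>
    mtrace ((P - Q) * X) = mtrace (P * X) - mtrace (Q * X)"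
  by (simp add: minus_mult_distrib_mat[of _ n n] mtrace_minus[of _ n])

lemma mtrace_mult_smult_left:
  "X \<in> carrier_mat n n \<Longrightarrow> P \<in> carrier_mat n n \<Longrightarrow> mtrace ((c \<cdot>\<^sub>m P) * X) = c * mtrace (P * X)"
  by (simp add: mult_smult_assoc_mat[of _ n n] mtrace_smult[of _ n])

lemma mtrace_adj_mult_unit:
  assumes M: "M \<in> carrier_mat n n" and i: "i < n" and j: "j < n"
  shows "mtrace (adj M * Matrix.mat n n (\<lambda>(a,b). if a = i \<and> b = j then 1 else 0)) = cnj (M $$ (i,j))"
proof -
  let ?E = "Matrix.mat n n (\<lambda>(a,b). if a = i \<and> b = j then (1::complex) else 0)"
  have "(adj M * ?E) $$ (a,a) = (if a = j then cnj (M $$ (i,j)) else 0)" if a: "a < n" for a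
  proof -
    have "(adj M * ?E) $$ (a,a) = (\<Sum>l<n. adj M $$ (a,l) * ?E $$ (l,a))"
      using M a by (intro index_mult_mat_sum) auto
    also have "\<dots> = (\<Sum>l<n. if l = i then (if a = j then cnj (M $$ (i,j)) else 0) else 0)"
      using M a i j by (intro sum.cong refl) auto
    finally show ?thesis using i by simp
  qed
  then show ?thesis using M j by (simp add: mtrace_def)
qed

lemma eq_mat_if_mtrace_adj_mult_eq:
  assumes Z: "Z \<in> carrier_mat n n" and Z': "Z' \<in> carrier_mat n n"
    and eq: "\<And>A. A \<in> carrier_mat n n \<Longrightarrow> mtrace (adj Z * A) = mtrace (adj Z' * A)"
  shows "Z = Z'"
proof (rule eq_matI)
  fix i j assume "i < dim_row Z'" "j < dim_col Z'"
  then have i: "i < n" and j: "j < n" using Z' by auto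
  have "cnj (Z $$ (i,j)) = cnj (Z' $$ (i,j))"
    using eq[of "Matrix.mat n n (\<lambda>(a,b). if a = i \<and> b = j then 1 else 0)"]
    by (simp add: mtrace_adj_mult_unit[OF Z i j] mtrace_adj_mult_unit[OF Z' i j])
  then show "Z $$ (i,j) = Z' $$ (i,j)" by simp
qed (use Z Z' in auto)


section \<open>Spectral theorem for Hermitian matrices\<close>

lemma hermitianD: "hermitian n A \<Longrightarrow> A \<in> carrier_mat n n" "hermitian n A \<Longrightarrow> adj A = A"
  unfolding hermitian_def by auto

lemma unitaryD: "unitary n U \<Longrightarrow> U \<in> carrier_mat n n"
  "unitary n U \<Longrightarrow> adj U * U = 1\<^sub>m n" "unitary n U \<Longrightarrow> U * adj U = 1\<^sub>m n"
  unfolding unitary_def by auto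

lemma unitary_cancel:
  assumes "unitary n U"
  shows "Y \<in> carrier_mat n n \<Longrightarrow> U * (adj U * Y) = Y"
    and "Y \<in> carrier_mat n n \<Longrightarrow> adj U * (U * Y) = Y"
    and "U * adj U = 1\<^sub>m n" and "adj U * U = 1\<^sub>m n"
    and "U \<in> carrier_mat n n" and "adj U \<in> carrier_mat n n"
  using mult_inverse_cancel[of U n "adj U" Y n] mult_inverse_cancel[of "adj U" n U Y n] unitaryD[OF assms]
  by auto

lemma unitary_mult:
  assumes U: "unitary n U" and V: "unitary n V"
  shows "unitary n (U * V)"
proof -
  note u = unitary_cancel[OF U] and v = unitary_cancel[OF V]
  have a: "adj (U * V) = adj V * adj U" using u v by (simp add: adj_mult)
  have "adj (U * V) * (U * V) = 1\<^sub>m n" unfolding a using u v by (simp add: assoc_mult_mat_sq[of _ n])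
  moreover have "U * V * adj (U * V) = 1\<^sub>m n"
    unfolding a using u v v(1)[of "adj U"] by (simp add: assoc_mult_mat_sq[of _ n])
  ultimately show ?thesis unfolding unitary_def using u v by simp
qed

lemma hermitian_adj_conj:
  assumes A: "hermitian n A" and U: "U \<in> carrier_mat n n"
  shows "hermitian n (adj U * A * U)"
proof -
  have Ac: "A \<in> carrier_mat n n" and aA: "adj A = A" using A by (auto simp: hermitian_def)
  have "adj (adj U * A * U) = adj U * A * U"
    using U Ac aA by (simp add: adj_mult[of _ n n _ n] assoc_mult_mat_sq[of _ n])
  then show ?thesis unfolding hermitian_def using U Ac by auto
qed

definition diagonal_upto :: "nat \<Rightarrow> nat \<Rightarrow> complex mat \<Rightarrow> bool" where
  "diagonal_upto n k B \<longleftrightarrow> (\<forall>i<n. \<forall>j<n. i \<noteq> j \<longrightarrow> (i < k \<or> j < k) \<longrightarrow> B $$ (i,j) = 0)"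

lemma complex_mat_has_eigenvalue:
  fixes C :: "complex mat"
  assumes C: "C \<in> carrier_mat m m" and m: "m > 0"
  shows "\<exists>z. eigenvalue C z"
proof -
  have "degree (char_poly C) = m" using degree_monic_char_poly[OF C] by simp
  then have "\<not> constant (poly (char_poly C))" using m by (simp add: constant_degree)
  then obtain z where "poly (char_poly C) z = 0" using fundamental_theorem_of_algebra by blast
  then show ?thesis using eigenvalue_root_char_poly[OF C] by blast
qed

lemma sum_lessThan_split_shift:
  fixes k n :: nat
  assumes "k \<le> n"
  shows "(\<Sum>j<n. h j) = (\<Sum>j<k. h j) + (\<Sum>b<n-k. h (b+k))"
proof -
  have "(\<Sum>j<n. h j) = sum h {0..<k} + sum h {k..<n}"
    using sum.atLeastLessThan_concat[of 0 k n h] assms by (simp add: lessThan_atLeast0)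
  also have "sum h {k..<n} = (\<Sum>b<n-k. h (b+k))"
    using assms sum.shift_bounds_nat_ivl[of h 0 k "n-k"] by (simp add: lessThan_atLeast0)
  finally show ?thesis by (simp add: lessThan_atLeast0)
qed

definition trailing_block :: "nat \<Rightarrow> nat \<Rightarrow> complex mat \<Rightarrow> complex mat" where
  "trailing_block n k B = Matrix.mat (n-k) (n-k) (\<lambda>(a,b). B $$ (a+k, b+k))"

definition pad_vec :: "nat \<Rightarrow> nat \<Rightarrow> complex vec \<Rightarrow> complex vec" where
  "pad_vec n k y = vec n (\<lambda>i. if i < k then 0 else y $ (i - k))"

lemma mult_pad_vec:
  assumes B: "B \<in> carrier_mat n n" and D: "diagonal_upto n k B" and k: "k \<le> n"
    and y: "y \<in> carrier_vec (n-k)"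
  shows "B *\<^sub>v pad_vec n k y = pad_vec n k (trailing_block n k B *\<^sub>v y)"
proof (rule eq_vecI)
  fix i assume "i < dim_vec (pad_vec n k (trailing_block n k B *\<^sub>v y))"
  then have i: "i < n" by (simp add: pad_vec_def)
  have "(B *\<^sub>v pad_vec n k y) $ i
      = (\<Sum>j<k. B $$ (i,j) * pad_vec n k y $ j) + (\<Sum>b<n-k. B $$ (i,b+k) * pad_vec n k y $ (b+k))"
    using B i k sum_lessThan_split_shift[of k n "\<lambda>j. B $$ (i,j) * pad_vec n k y $ j"]
    by (simp add: scalar_prod_def lessThan_atLeast0 pad_vec_def)
  also have "\<dots> = (\<Sum>b<n-k. B $$ (i,b+k) * y $ b)"
    using k unfolding pad_vec_def by (auto intro!: sum.cong)
  also have "\<dots> = pad_vec n k (trailing_block n k B *\<^sub>v y) $ i"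
  proof (cases "i < k")
    case True
    then show ?thesis using D i unfolding diagonal_upto_def pad_vec_def by (auto intro!: sum.neutral)
  next
    case False
    then show ?thesis
      using i y unfolding trailing_block_def pad_vec_def by (simp add: scalar_prod_def lessThan_atLeast0)
  qed
  finally show "(B *\<^sub>v pad_vec n k y) $ i = pad_vec n k (trailing_block n k B *\<^sub>v y) $ i" .
qed (use B in \<open>simp add: pad_vec_def\<close>)

text \<open>The first \<open>k\<close> rows of \<open>B\<close> vanish outside the diagonal, so an eigenvector of the trailing
  block, padded with zeros, is an eigenvector of \<open>B\<close>.\<close>

lemma eigenvector_vanishing_upto:
  fixes B :: "complex mat"
  assumes B: "B \<in> carrier_mat n n" and D: "diagonal_upto n k B" and k: "k < n"
  shows "\<exists>x \<mu>. x \<in> carrier_vec n \<and> x \<noteq> 0\<^sub>v n \<and> (\<forall>i<k. x $ i = 0) \<and> B *\<^sub>v x = \<mu> \<cdot>\<^sub>v x"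
proof -
  have C: "trailing_block n k B \<in> carrier_mat (n-k) (n-k)" unfolding trailing_block_def by simp
  obtain \<mu> y where "eigenvector (trailing_block n k B) y \<mu>"
    using complex_mat_has_eigenvalue[OF C] k unfolding eigenvalue_def by auto
  then have y: "y \<in> carrier_vec (n-k)" and y0: "y \<noteq> 0\<^sub>v (n-k)"
    and Cy: "trailing_block n k B *\<^sub>v y = \<mu> \<cdot>\<^sub>v y"
    unfolding eigenvector_def using C by auto
  have "B *\<^sub>v pad_vec n k y = \<mu> \<cdot>\<^sub>v pad_vec n k y"
    unfolding mult_pad_vec[OF B D less_imp_le[OF k] y] Cy using y by (intro eq_vecI) (auto simp: pad_vec_def)
  moreover have "pad_vec n k y \<noteq> 0\<^sub>v n"
  proof
    assume x0: "pad_vec n k y = 0\<^sub>v n"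
    have "y $ b = 0" if "b < n - k" for b
      using arg_cong[OF x0, of "\<lambda>x. x $ (b+k)"] that by (simp add: pad_vec_def)
    then show False using y y0 by (metis eq_vecI carrier_vecD index_zero_vec)
  qed
  moreover have "pad_vec n k y \<in> carrier_vec n" "\<forall>i<k. pad_vec n k y $ i = 0"
    using k by (auto simp: pad_vec_def)
  ultimately show ?thesis by blast
qed

lemma normalized_eigenvector_vanishing_upto:
  fixes B :: "complex mat"
  assumes B: "B \<in> carrier_mat n n" and D: "diagonal_upto n k B" and k: "k < n"
  shows "\<exists>u \<mu> r. u \<in> carrier_vec n \<and> (\<Sum>i<n. (cmod (u$i))\<^sup>2) = 1 \<and> u$k = of_real r \<and> r \<le> 0
    \<and> (\<forall>j<k. u$j = 0) \<and> B *\<^sub>v u = \<mu> \<cdot>\<^sub>v u"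
proof -
  obtain x \<mu> where xc: "x \<in> carrier_vec n" and x0: "x \<noteq> 0\<^sub>v n" and xz: "\<forall>i<k. x $ i = 0"
    and Bx: "B *\<^sub>v x = \<mu> \<cdot>\<^sub>v x"
    using eigenvector_vanishing_upto[OF B D k] by blast
  define N where "N = (\<Sum>i<n. (cmod (x$i))\<^sup>2)"
  obtain i0 where i0: "i0 < n" "x$i0 \<noteq> 0"
    using x0 xc by (metis eq_vecI carrier_vecD index_zero_vec)
  have "(cmod (x$i0))\<^sup>2 \<le> N" unfolding N_def using i0 by (intro member_le_sum) auto
  then have Npos: "N > 0" using i0 by (smt (verit) zero_less_norm_iff zero_less_power)
  text \<open>The phase \<open>ph\<close> makes the \<open>k\<close>-th entry real and nonpositive, as the Householder step requires.\<close>
  define ph where "ph = (if x$k = 0 then 1 else cnj (x$k) / of_real (cmod (x$k)))"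
  have ph1: "cmod ph = 1" unfolding ph_def by (auto simp: norm_divide)
  have phx: "ph * x$k = of_real (cmod (x$k))"
  proof (cases "x$k = 0")
    case False
    have "cnj (x$k) * x$k = of_real ((cmod (x$k))\<^sup>2)" by (metis complex_norm_square mult.commute)
    then show ?thesis using False unfolding ph_def by (simp add: power2_eq_square)
  qed (simp add: ph_def)
  define \<alpha> where "\<alpha> = - ph / of_real (sqrt N)"
  define u where "u = \<alpha> \<cdot>\<^sub>v x"
  define r where "r = - cmod (x$k) / sqrt N"
  have ui: "i < n \<Longrightarrow> u$i = \<alpha> * x$i" for i unfolding u_def using xc by simp
  have "(\<Sum>i<n. (cmod (u$i))\<^sup>2) = (cmod \<alpha>)\<^sup>2 * N"
    unfolding N_def by (simp add: ui norm_mult power_mult_distrib sum_distrib_left)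
  also have "(cmod \<alpha>)\<^sup>2 = 1 / N" unfolding \<alpha>_def using Npos ph1 by (simp add: norm_divide power_divide)
  finally have "(\<Sum>i<n. (cmod (u$i))\<^sup>2) = 1" using Npos by simp
  moreover have "u$k = of_real r"
    using ui[OF k] phx unfolding \<alpha>_def r_def by (simp add: mult.commute)
  moreover have "B *\<^sub>v u = \<mu> \<cdot>\<^sub>v u" unfolding u_def
    by (simp add: mult_mat_vec[OF B xc] Bx smult_smult_assoc mult.commute)
  moreover have "r \<le> 0" unfolding r_def using Npos by simp
  moreover have "u \<in> carrier_vec n" "\<forall>j<k. u$j = 0" using ui xz k xc unfolding u_def by auto
  ultimately show ?thesis by blast
qed

definition householder :: "nat \<Rightarrow> real \<Rightarrow> complex vec \<Rightarrow> complex mat" where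
  "householder n c w = Matrix.mat n n (\<lambda>(i,j). (if i = j then 1 else 0) - of_real c * w$i * cnj (w$j))"

lemma householder_index:
  "i < n \<Longrightarrow> j < n \<Longrightarrow> householder n c w $$ (i,j) = (if i = j then 1 else 0) - of_real c * w$i * cnj (w$j)"
  unfolding householder_def by simp

lemma adj_householder: "adj (householder n c w) = householder n c w"
  by (rule eq_matI) (auto simp: householder_index householder_def)

lemma householder_unitary:
  fixes w :: "complex vec" and c :: real
  assumes cs: "c * (\<Sum>i<n. (cmod (w$i))\<^sup>2) = 2"
  shows "unitary n (householder n c w)"
proof -
  let ?R = "householder n c w"
  define s where "s = (\<Sum>i<n. (cmod (w$i))\<^sup>2)"
  have Rc: "?R \<in> carrier_mat n n" unfolding householder_def by simp
  have sw: "(\<Sum>l<n. cnj (w$l) * w$l) = of_real s"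
    unfolding s_def of_real_sum by (intro sum.cong refl) (metis complex_norm_square mult.commute)
  have "?R * ?R = 1\<^sub>m n"
  proof (rule eq_matI)
    fix i j assume "i < dim_row (1\<^sub>m n)" "j < dim_col (1\<^sub>m n)"
    then have i: "i < n" and j: "j < n" by auto
    have "(?R * ?R) $$ (i,j) = (\<Sum>l<n. (if l = i then (if i = j then 1 else 0) else 0)
         - of_real c * w$i * (if l = j then cnj (w$l) else 0)
         - of_real c * cnj (w$j) * (if l = i then w$l else 0)
         + of_real c * of_real c * w$i * cnj (w$j) * (cnj (w$l) * w$l))"
      unfolding index_mult_mat_sum[OF Rc Rc i j]
      by (intro sum.cong refl) (auto simp: householder_index i j algebra_simps)
    also have "\<dots> = (if i = j then 1 else 0) - of_real c * w$i * cnj (w$j)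
         - of_real c * cnj (w$j) * w$i + of_real c * of_real c * w$i * cnj (w$j) * of_real s"
      using i j by (simp add: sum.distrib sum_subtractf flip: sum_distrib_left sw)
    also have "\<dots> = (if i = j then 1 else 0) + w$i * cnj (w$j) * (of_real (c * s) - 2) * of_real c"
      by (simp add: algebra_simps)
    finally show "(?R * ?R) $$ (i,j) = 1\<^sub>m n $$ (i,j)" using cs i j unfolding s_def by simp
  qed (use Rc in auto)
  then show "unitary n ?R" unfolding unitary_def using Rc adj_householder by simp
qed

text \<open>With \<open>w = e\<^sub>k - u\<close> and \<open>c = 2 / \<parallel>w\<parallel>\<^sup>2\<close>, the reflection maps \<open>e\<^sub>k\<close> to \<open>u\<close>; since \<open>u\<close>
  vanishes in the first \<open>k\<close> coordinates, it fixes \<open>e\<^sub>0, \<dots>, e\<^sub>k\<^sub>-\<^sub>1\<close>.\<close>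

lemma householder_to_unit_vector:
  fixes u :: "complex vec" and r :: real
  assumes k: "k < n"
    and un: "(\<Sum>i<n. (cmod (u$i))\<^sup>2) = 1" and uk: "u$k = of_real r" and r: "r \<le> 0"
    and u0: "\<forall>j<k. u$j = 0"
  shows "\<exists>V. unitary n V \<and> (\<forall>i<n. V$$(i,k) = u$i) \<and> (\<forall>i<n. \<forall>j<k. V$$(i,j) = (if i = j then 1 else 0))"
proof -
  define w where "w = vec n (\<lambda>i. (if i = k then 1 else 0) - u$i)"
  define s where "s = (\<Sum>i<n. (cmod (w$i))\<^sup>2)"
  have wk: "w$k = of_real (1 - r)" unfolding w_def using k uk by simp
  have wi: "i < n \<Longrightarrow> i \<noteq> k \<Longrightarrow> w$i = - u$i" for i unfolding w_def by simp
  have kin: "k \<in> {..<n}" using k by simp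
  have "s = (cmod (w$k))\<^sup>2 + (\<Sum>i\<in>{..<n}-{k}. (cmod (w$i))\<^sup>2)"
    unfolding s_def by (subst sum.remove[OF _ kin]) auto
  also have "(\<Sum>i\<in>{..<n}-{k}. (cmod (w$i))\<^sup>2) = (\<Sum>i\<in>{..<n}-{k}. (cmod (u$i))\<^sup>2)"
    by (intro sum.cong) (auto simp: wi)
  also have "\<dots> = 1 - r\<^sup>2"
    using un uk by (subst (asm) sum.remove[OF _ kin]) auto
  finally have s: "s = 2 - 2 * r"
    using wk by (simp only: norm_of_real power2_abs) (simp add: power2_eq_square algebra_simps)
  define c where "c = 2 / s"
  have cs: "c * s = 2" and c1r: "c * (1 - r) = 1" unfolding c_def s using r by (auto simp: field_simps)
  have "householder n c w $$ (i,k) = u$i" if i: "i < n" for i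
  proof -
    have "householder n c w $$ (i,k) = (if i = k then 1 else 0) - w$i * of_real (c * (1 - r))"
      using i k by (simp add: householder_index wk)
    then show ?thesis using c1r i unfolding w_def by simp
  qed
  moreover have "householder n c w $$ (i,j) = (if i = j then 1 else 0)" if "i < n" "j < k" for i j
    using that k u0 wi[of j] by (simp add: householder_index)
  ultimately show ?thesis using householder_unitary[OF cs[unfolded s_def]] by blast
qed

text \<open>Hermiticity transfers the vanishing from the first \<open>k\<close> columns to the first \<open>k\<close> rows.\<close>

lemma diagonal_upto_eigencolumns:
  assumes hB: "hermitian n B" and V: "unitary n V"
    and eig: "\<And>j. j < k \<Longrightarrow> \<exists>c. \<forall>a<n. (B * V) $$ (a,j) = c * V $$ (a,j)"
  shows "diagonal_upto n k (adj V * B * V)"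
proof -
  note v = unitary_cancel[OF V]
  have Bc: "B \<in> carrier_mat n n" using hB by (rule hermitianD)
  define B' where "B' = adj V * B * V"
  have hB': "hermitian n B'" unfolding B'_def using hermitian_adj_conj[OF hB] v by simp
  have low: "B' $$ (i,j) = 0" if i: "i < n" and j: "j < n" and ij: "i \<noteq> j" and jk: "j < k" for i j
  proof -
    obtain c where c: "\<forall>a<n. (B * V) $$ (a,j) = c * V $$ (a,j)" using eig[OF jk] by blast
    have "B' = adj V * (B * V)" unfolding B'_def using v Bc by (simp add: assoc_mult_mat_sq[of _ n])
    then have "B' $$ (i,j) = (\<Sum>a<n. adj V $$ (i,a) * (B * V) $$ (a,j))"
      using index_mult_mat_sum[of "adj V" n n "B * V" n i j] v Bc i j by simp
    also have "\<dots> = c * (\<Sum>a<n. adj V $$ (i,a) * V $$ (a,j))"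
      using c by (simp add: sum_distrib_left algebra_simps)
    also have "(\<Sum>a<n. adj V $$ (i,a) * V $$ (a,j)) = (adj V * V) $$ (i,j)"
      by (rule index_mult_mat_sum[symmetric]) (use v i j in auto)
    finally show ?thesis using v i j ij by simp
  qed
  have "B' $$ (i,j) = cnj (B' $$ (j,i))" if "i < n" "j < n" for i j
    using hermitianD[OF hB'] that adj_index[of i B' j] by auto
  then show ?thesis
    unfolding diagonal_upto_def B'_def[symmetric] using low by (metis complex_cnj_zero)
qed

lemma diagonal_upto_Suc:
  fixes B :: "complex mat"
  assumes hB: "hermitian n B" and D: "diagonal_upto n k B" and k: "k < n"
  shows "\<exists>V. unitary n V \<and> diagonal_upto n (Suc k) (adj V * B * V)"
proof -
  have Bc: "B \<in> carrier_mat n n" using hB by (rule hermitianD)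
  obtain u \<mu> r where uc: "u \<in> carrier_vec n" and un: "(\<Sum>i<n. (cmod (u$i))\<^sup>2) = 1"
    and uk: "u$k = of_real r" and r: "r \<le> 0" and u0: "\<forall>j<k. u$j = 0" and Bu: "B *\<^sub>v u = \<mu> \<cdot>\<^sub>v u"
    using normalized_eigenvector_vanishing_upto[OF Bc D k] by blast
  obtain V where V: "unitary n V" and Vk: "\<forall>i<n. V$$(i,k) = u$i"
    and Vj: "\<forall>i<n. \<forall>j<k. V$$(i,j) = (if i = j then 1 else 0)"
    using householder_to_unit_vector[OF k un uk r u0] by blast
  have Vc: "V \<in> carrier_mat n n" using V by (rule unitaryD)
  have "\<exists>c. \<forall>a<n. (B * V) $$ (a,j) = c * V $$ (a,j)" if j: "j < Suc k" for j
  proof (cases "j = k")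
    case True
    have "(B * V) $$ (a,k) = \<mu> * V $$ (a,k)" if a: "a < n" for a
    proof -
      have "(B * V) $$ (a,k) = (B *\<^sub>v u) $ a"
        using index_mult_mat_sum[OF Bc Vc a k] Vk a Bc uc by (simp add: scalar_prod_def lessThan_atLeast0)
      then show ?thesis using Bu a uc Vk by simp
    qed
    then show ?thesis using True by blast
  next
    case False
    then have jk: "j < k" using j by simp
    have "(B * V) $$ (a,j) = B $$ (j,j) * V $$ (a,j)" if a: "a < n" for a
    proof -
      have jn: "j < n" using jk k by simp
      have "(B * V) $$ (a,j) = (\<Sum>l<n. if l = j then B $$ (a,l) else 0)"
        unfolding index_mult_mat_sum[OF Bc Vc a jn] by (intro sum.cong) (use Vj jk in auto)
      also have "\<dots> = B $$ (a,j)" using jn by simp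
      finally have "(B * V) $$ (a,j) = B $$ (a,j)" .
      then show ?thesis using D a jk k Vj unfolding diagonal_upto_def by auto
    qed
    then show ?thesis by blast
  qed
  then show ?thesis using diagonal_upto_eigencolumns[OF hB V] V by blast
qed

lemma hermitian_diagonal_upto:
  assumes hA: "hermitian n A" and kn: "k \<le> n"
  shows "\<exists>U. unitary n U \<and> diagonal_upto n k (adj U * A * U)"
  using kn
proof (induction k)
  case 0
  have "unitary n (1\<^sub>m n)" unfolding unitary_def by simp
  then show ?case unfolding diagonal_upto_def by auto
next
  case (Suc k)
  then obtain U where U: "unitary n U" and D: "diagonal_upto n k (adj U * A * U)" by auto
  have Uc: "U \<in> carrier_mat n n" and Ac: "A \<in> carrier_mat n n" using U hA unitaryD hermitianD by auto
  obtain V where V: "unitary n V" and D': "diagonal_upto n (Suc k) (adj V * (adj U * A * U) * V)"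
    using diagonal_upto_Suc[OF hermitian_adj_conj[OF hA Uc] D] Suc by auto
  have "adj (U * V) * A * (U * V) = adj V * (adj U * A * U) * V"
    using Uc Ac unitaryD[OF V] by (simp add: adj_mult[OF Uc] assoc_mult_mat_sq[of _ n])
  then show ?case using unitary_mult[OF U V] D' by metis
qed

theorem hermitian_spectral_decomposition:
  assumes hA: "hermitian n A"
  shows "\<exists>U (d::nat \<Rightarrow> real). unitary n U \<and> A = U * mat_diag n (\<lambda>i. complex_of_real (d i)) * adj U"
proof -
  obtain U where U: "unitary n U" and D: "diagonal_upto n n (adj U * A * U)"
    using hermitian_diagonal_upto[OF hA le_refl] by blast
  note u = unitary_cancel[OF U]
  have Ac: "A \<in> carrier_mat n n" using hA by (rule hermitianD)
  define B where "B = adj U * A * U"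
  have hB: "hermitian n B" unfolding B_def using hermitian_adj_conj[OF hA] u by simp
  have Bc: "B \<in> carrier_mat n n" using hB by (rule hermitianD)
  define d where "d i = Re (B $$ (i,i))" for i
  have "B $$ (i,i) = of_real (d i)" if "i < n" for i
  proof -
    have "cnj (B $$ (i,i)) = B $$ (i,i)"
      using hermitianD[OF hB] Bc that adj_index[of i B i] by auto
    then show ?thesis unfolding d_def by (metis Reals_cnj_iff complex_is_Real_iff of_real_Re)
  qed
  then have "B = mat_diag n (\<lambda>i. complex_of_real (d i))"
    using D Bc unfolding diagonal_upto_def B_def[symmetric] by (intro eq_matI) (auto simp: mat_diag_def)
  moreover have "U * B * adj U = A"
    unfolding B_def using u Ac by (simp add: assoc_mult_mat_sq[of _ n])
  ultimately show ?thesis using U by blast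
qed

section \<open>Functional calculus\<close>

definition unitary_diag :: "nat \<Rightarrow> complex mat \<Rightarrow> (nat \<Rightarrow> complex) \<Rightarrow> complex mat" where
  "unitary_diag n U \<phi> = U * mat_diag n \<phi> * adj U"

lemma hermitian_unitary_diag_decomposition:
  "hermitian n A \<Longrightarrow> \<exists>U (d::nat\<Rightarrow>real). unitary n U \<and> A = unitary_diag n U (\<lambda>i. complex_of_real (d i))"
  unfolding unitary_diag_def by (rule hermitian_spectral_decomposition)

lemma mat_diag_intertwine_fun:
  fixes a b :: "nat \<Rightarrow> real" and f :: "real \<Rightarrow> complex"
  assumes M: "M \<in> carrier_mat n n"
    and eq: "mat_diag n (\<lambda>i. complex_of_real (a i)) * M = M * mat_diag n (\<lambda>i. complex_of_real (b i))"
  shows "mat_diag n (\<lambda>i. f (a i)) * M = M * mat_diag n (\<lambda>i. f (b i))"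
proof -
  have "M $$ (i,j) = 0 \<or> a i = b j" if "i < n" "j < n" for i j
    using arg_cong[OF eq, of "\<lambda>P. P $$ (i,j)"] that M
    by (simp add: mat_diag_mult_left[OF M] mat_diag_mult_right[OF M])
  then have "f (a i) * M $$ (i,j) = M $$ (i,j) * f (b j)" if "i < n" "j < n" for i j
    using that by (metis mult.commute mult_zero_left mult_zero_right)
  then show ?thesis
    using M by (intro eq_matI) (auto simp: mat_diag_mult_left[OF M] mat_diag_mult_right[OF M])
qed

text \<open>\<open>M = V\<^sup>\<dagger> U\<close> intertwines the two diagonal forms, hence also their images under \<open>f\<close>.\<close>

lemma unitary_diag_fun_cong:
  fixes d d' :: "nat \<Rightarrow> real"
  assumes U: "unitary n U" and V: "unitary n V"
    and eq: "unitary_diag n U (\<lambda>i. complex_of_real (d i)) = unitary_diag n V (\<lambda>i. complex_of_real (d' i))"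
  shows "unitary_diag n U (\<lambda>i. f (d i)) = unitary_diag n V (\<lambda>i. f (d' i))"
proof -
  note u = unitary_cancel[OF U] and v = unitary_cancel[OF V]
  define A where "A = unitary_diag n U (\<lambda>i. complex_of_real (d i))"
  define D where "D = mat_diag n (\<lambda>i. complex_of_real (d i))"
  define D' where "D' = mat_diag n (\<lambda>i. complex_of_real (d' i))"
  define F where "F = mat_diag n (\<lambda>i. f (d i))"
  define F' where "F' = mat_diag n (\<lambda>i. f (d' i))"
  have Dc: "D \<in> carrier_mat n n" "D' \<in> carrier_mat n n" "F \<in> carrier_mat n n" "F' \<in> carrier_mat n n"
    unfolding D_def D'_def F_def F'_def by auto
  define M where "M = adj V * U"
  have Mc: "M \<in> carrier_mat n n" unfolding M_def using u v by simp
  have Ac: "A \<in> carrier_mat n n" unfolding A_def unitary_diag_def using u by simp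
  have "A = V * D' * adj V" using eq unfolding A_def unitary_diag_def D'_def .
  then have e1: "adj V * A = D' * adj V" using Dc v by (simp add: assoc_mult_mat_sq[of _ n])
  have e2: "A * U = U * D" unfolding A_def unitary_diag_def D_def using Dc u by (simp add: assoc_mult_mat_sq[of _ n])
  have "D' * M = (D' * adj V) * U" unfolding M_def using u v Dc by (simp add: assoc_mult_mat_sq[of _ n])
  also have "\<dots> = adj V * (A * U)" unfolding e1[symmetric] using u v Ac by (simp add: assoc_mult_mat_sq[of _ n])
  also have "\<dots> = M * D" unfolding e2 M_def using u v Dc by (simp add: assoc_mult_mat_sq[of _ n])
  finally have FM: "F' * M = M * F"
    unfolding D'_def D_def F_def F'_def by (rule mat_diag_intertwine_fun[OF Mc])
  have "V * F' * adj V = V * F' * (M * adj U)"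
    unfolding M_def using u v by (simp add: assoc_mult_mat_sq[of _ n])
  also have "\<dots> = V * (F' * M) * adj U" using u v Dc Mc by (simp add: assoc_mult_mat_sq[of _ n])
  also have "\<dots> = V * (M * F) * adj U" unfolding FM ..
  also have "\<dots> = U * F * adj U" unfolding M_def using u v Dc by (simp add: assoc_mult_mat_sq[of _ n])
  finally show ?thesis unfolding F_def F'_def unitary_diag_def by simp
qed

lemma matfun_unitary_diag:
  fixes d :: "nat \<Rightarrow> real"
  assumes U: "unitary n U" and A: "A = unitary_diag n U (\<lambda>i. complex_of_real (d i))"
  shows "matfun n f A = unitary_diag n U (\<lambda>i. f (d i))"
proof -
  obtain V d' where V: "unitary n V" and A': "A = unitary_diag n V (\<lambda>i. complex_of_real (d' i))"
    and B: "matfun n f A = unitary_diag n V (\<lambda>i. f (d' i))"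
    using someI_ex[of "\<lambda>B. \<exists>V (d'::nat \<Rightarrow> real). unitary n V
      \<and> A = V * mat_diag n (\<lambda>i. complex_of_real (d' i)) * adj V
      \<and> B = V * mat_diag n (\<lambda>i. f (d' i)) * adj V"] U A
    unfolding matfun_def unitary_diag_def by blast
  show ?thesis unfolding B using unitary_diag_fun_cong[OF V U, of d' d] A A' by simp
qed

lemma unitary_conj_mult:
  assumes U: "unitary n U" and A: "A \<in> carrier_mat n n" and B: "B \<in> carrier_mat n n"
  shows "U * A * adj U * (U * B * adj U) = U * (A * B) * adj U"
  using A B unitary_cancel[OF U] by (simp add: assoc_mult_mat_sq[of _ n])

lemma unitary_diag_carrier [simp]: "unitary n U \<Longrightarrow> unitary_diag n U \<phi> \<in> carrier_mat n n"
  unfolding unitary_diag_def using unitary_cancel by simp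

lemma unitary_diag_mult:
  "unitary n U \<Longrightarrow> unitary_diag n U \<phi> * unitary_diag n U \<psi> = unitary_diag n U (\<lambda>i. \<phi> i * \<psi> i)"
  unfolding unitary_diag_def by (simp add: unitary_conj_mult)

lemma unitary_diag_commute:
  "unitary n U \<Longrightarrow> unitary_diag n U \<phi> * unitary_diag n U \<psi> = unitary_diag n U \<psi> * unitary_diag n U \<phi>"
  by (simp add: unitary_diag_mult mult.commute)

lemma adj_unitary_diag: "unitary n U \<Longrightarrow> adj (unitary_diag n U \<phi>) = unitary_diag n U (\<lambda>i. cnj (\<phi> i))"
  unfolding unitary_diag_def using unitary_cancel
  by (simp add: adj_mult[of _ n n _ n] adj_mat_diag assoc_mult_mat_sq[of _ n])

lemma unitary_diag_one: "unitary n U \<Longrightarrow> unitary_diag n U (\<lambda>i. 1) = 1\<^sub>m n"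
  unfolding unitary_diag_def using unitary_cancel[of n U] by simp

lemma smult_unitary_diag: "unitary n U \<Longrightarrow> c \<cdot>\<^sub>m unitary_diag n U \<phi> = unitary_diag n U (\<lambda>i. c * \<phi> i)"
proof -
  assume U: "unitary n U"
  have d: "c \<cdot>\<^sub>m mat_diag n \<phi> = mat_diag n (\<lambda>i. c * \<phi> i)" by (intro eq_matI) (auto simp: mat_diag_def)
  have Uc: "U \<in> carrier_mat n n" "adj U \<in> carrier_mat n n" using unitary_cancel[OF U] by auto
  have "c \<cdot>\<^sub>m (U * mat_diag n \<phi> * adj U) = (c \<cdot>\<^sub>m (U * mat_diag n \<phi>)) * adj U"
    using Uc by (simp add: mult_smult_assoc_mat[of _ n n _ n])
  also have "c \<cdot>\<^sub>m (U * mat_diag n \<phi>) = U * (c \<cdot>\<^sub>m mat_diag n \<phi>)"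
    using Uc by (simp add: mult_smult_distrib[of _ n n _ n])
  finally show ?thesis unfolding unitary_diag_def d .
qed

lemma mtrace_unitary_diag: "unitary n U \<Longrightarrow> mtrace (unitary_diag n U \<phi>) = (\<Sum>i<n. \<phi> i)"
proof -
  assume U: "unitary n U"
  have "mtrace (U * mat_diag n \<phi> * adj U) = mtrace (adj U * (U * mat_diag n \<phi>))"
    by (rule mtrace_mult_comm[of _ n n]) (use unitary_cancel[OF U] in auto)
  then show ?thesis unfolding unitary_diag_def using unitary_cancel[OF U] by (simp add: mtrace_mat_diag)
qed

lemma unitary_unitary_diag:
  assumes U: "unitary n U" and \<phi>: "\<And>i. cnj (\<phi> i) * \<phi> i = 1"
  shows "unitary n (unitary_diag n U \<phi>)"
proof -
  have "\<phi> i * cnj (\<phi> i) = 1" for i using \<phi>[of i] by (simp only: mult.commute)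
  then show ?thesis
    unfolding unitary_def using U \<phi> by (simp add: adj_unitary_diag unitary_diag_mult unitary_diag_one)
qed

lemma hermitian_unitary_diag: "unitary n U \<Longrightarrow> hermitian n (unitary_diag n U (\<lambda>i. complex_of_real (r i)))"
  unfolding hermitian_def by (simp add: adj_unitary_diag)

lemma unitary_diag_mult_unitary:
  assumes W: "unitary n W" and V: "unitary n V"
  shows "unitary_diag n (W * V) \<phi> = W * unitary_diag n V \<phi> * adj W"
  unfolding unitary_diag_def using unitary_cancel[OF W] unitary_cancel[OF V]
  by (simp add: adj_mult[of _ n n _ n] assoc_mult_mat_sq[of _ n])

lemma matfun_unitary_conj:
  assumes hA: "hermitian n A" and W: "unitary n W"
  shows "matfun n f (W * A * adj W) = W * matfun n f A * adj W"
proof -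
  obtain V d where V: "unitary n V" and A: "A = unitary_diag n V (\<lambda>i. complex_of_real (d i))"
    using hermitian_unitary_diag_decomposition[OF hA] by blast
  have "W * A * adj W = unitary_diag n (W * V) (\<lambda>i. complex_of_real (d i))"
    unfolding A unitary_diag_mult_unitary[OF W V] ..
  then have "matfun n f (W * A * adj W) = unitary_diag n (W * V) (\<lambda>i. f (d i))"
    by (rule matfun_unitary_diag[OF unitary_mult[OF W V]])
  also have "\<dots> = W * matfun n f A * adj W"
    unfolding matfun_unitary_diag[OF V A] by (rule unitary_diag_mult_unitary[OF W V])
  finally show ?thesis .
qed

lemma hermitian_matfun:
  assumes "hermitian n A"
  shows "hermitian n (matfun n (\<lambda>x. complex_of_real (f x)) A)"
proof -
  obtain V d where V: "unitary n V" and A: "A = unitary_diag n V (\<lambda>i. complex_of_real (d i))"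
    using hermitian_unitary_diag_decomposition[OF assms] by blast
  show ?thesis unfolding matfun_unitary_diag[OF V A] by (rule hermitian_unitary_diag[OF V])
qed

context
  fixes n :: nat and W :: "complex mat"
  assumes W: "unitary n W"
begin

lemma unitary_conj_carrier [simp]: "X \<in> carrier_mat n n \<Longrightarrow> W * X * adj W \<in> carrier_mat n n"
  using unitary_cancel[OF W] by simp

lemma unitary_conj_one: "W * 1\<^sub>m n * adj W = 1\<^sub>m n"
  using unitary_cancel[OF W] by simp

lemma unitary_conj_zero: "W * 0\<^sub>m n n * adj W = 0\<^sub>m n n"
  using unitary_cancel[OF W] by simp

lemma unitary_conj_minus:
  "X \<in> carrier_mat n n \<Longrightarrow> Y \<in> carrier_mat n n \<Longrightarrow> W * (X - Y) * adj W = W * X * adj W - W * Y * adj W"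
  using unitary_cancel[OF W]
  by (simp add: mult_minus_distrib_mat[of _ n n _ n] minus_mult_distrib_mat[of _ n n _ _ n])

lemma unitary_conj_smult: "X \<in> carrier_mat n n \<Longrightarrow> W * (c \<cdot>\<^sub>m X) * adj W = c \<cdot>\<^sub>m (W * X * adj W)"
  using unitary_cancel[OF W] by (simp add: mult_smult_distrib[of _ n n _ n] mult_smult_assoc_mat[of _ n n _ n])

lemma adj_unitary_conj: "X \<in> carrier_mat n n \<Longrightarrow> adj (W * X * adj W) = W * adj X * adj W"
  using unitary_cancel[OF W] by (simp add: adj_mult[of _ n n _ n] assoc_mult_mat_sq[of _ n])

lemma hermitian_unitary_conj: "hermitian n X \<Longrightarrow> hermitian n (W * X * adj W)"
  unfolding hermitian_def using adj_unitary_conj by auto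

lemma unitary_conj_inj:
  assumes X: "X \<in> carrier_mat n n" and Y: "Y \<in> carrier_mat n n" and eq: "W * X * adj W = W * Y * adj W"
  shows "X = Y"
proof -
  have "adj W * (W * X * adj W) * W = adj W * (W * Y * adj W) * W" using eq by simp
  then show "X = Y" using X Y unitary_cancel[OF W] by (simp add: assoc_mult_mat_sq[of _ n])
qed

lemma mtrace_unitary_conj: "X \<in> carrier_mat n n \<Longrightarrow> mtrace (W * X * adj W) = mtrace X"
  using mtrace_mult_comm[of W n n "X * adj W"] unitary_cancel[OF W] by (simp add: assoc_mult_mat_sq[of _ n])

lemma unitary_conj_commuting: "A \<in> carrier_mat n n \<Longrightarrow> A * W = W * A \<Longrightarrow> W * A * adj W = A"
  using unitary_cancel[OF W] by (metis assoc_mult_mat_sq right_mult_one_mat)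

text \<open>\<open>Tr[S X\<^sup>\<dagger> S Y]\<close> is the KMS inner product for \<open>S = \<rho>\<^sup>1\<^sup>/\<^sup>2\<close>.\<close>

lemma mtrace_sandwich_unitary_conj:
  assumes S: "S \<in> carrier_mat n n" and SW: "S * W = W * S"
    and X: "X \<in> carrier_mat n n" and Y: "Y \<in> carrier_mat n n"
  shows "mtrace (S * adj (W * X * adj W) * S * (W * Y * adj W)) = mtrace (S * adj X * S * Y)"
proof -
  note w = unitary_cancel[OF W]
  have SW': "S * (W * Z) = W * (S * Z)" "adj W * (S * (W * Z)) = S * Z" if "Z \<in> carrier_mat n n" for Z
    using that S w by (simp_all add: SW flip: assoc_mult_mat_sq[of S n W Z])
  have "S * adj (W * X * adj W) * S * (W * Y * adj W) = W * (S * adj X * S * Y) * adj W"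
    unfolding adj_unitary_conj[OF X] using w X Y S by (simp add: assoc_mult_mat_sq[of _ n] SW')
  then show ?thesis using X Y S by (simp add: mtrace_unitary_conj)
qed

lemma cscalar_prod_adj_mult:
  assumes v: "v \<in> carrier_vec n" and x: "x \<in> carrier_vec n"
  shows "conjugate v \<bullet> (W *\<^sub>v x) = conjugate (adj W *\<^sub>v v) \<bullet> x"
proof -
  have Wc: "W \<in> carrier_mat n n" using W by (rule unitaryD)
  have "conjugate v \<bullet> (W *\<^sub>v x) = (\<Sum>i<n. \<Sum>j<n. cnj (v$i) * W$$(i,j) * x$j)"
    using Wc v x by (simp add: scalar_prod_def lessThan_atLeast0 sum_distrib_left mult.assoc)
  also have "\<dots> = (\<Sum>j<n. \<Sum>i<n. cnj (v$i) * W$$(i,j) * x$j)" by (rule sum.swap)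
  also have "\<dots> = conjugate (adj W *\<^sub>v v) \<bullet> x"
    using Wc v x by (simp add: scalar_prod_def lessThan_atLeast0 sum_distrib_right
        sum_distrib_left mult.commute mult.left_commute)
  finally show ?thesis .
qed

lemma adj_mult_vec_carrier: "v \<in> carrier_vec n \<Longrightarrow> adj W *\<^sub>v v \<in> carrier_vec n"
  using unitary_cancel[OF W] by (metis mult_mat_vec_carrier)

lemma quadratic_form_unitary_conj:
  assumes A: "A \<in> carrier_mat n n" and v: "v \<in> carrier_vec n"
  shows "conjugate v \<bullet> ((W * A * adj W) *\<^sub>v v) = conjugate (adj W *\<^sub>v v) \<bullet> (A *\<^sub>v (adj W *\<^sub>v v))"
proof -
  have Wc: "W \<in> carrier_mat n n" using W by (rule unitaryD)
  have "(W * A * adj W) *\<^sub>v v = W *\<^sub>v (A *\<^sub>v (adj W *\<^sub>v v))"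
    using Wc A v adj_mult_vec_carrier[OF v]
    by (simp add: assoc_mult_mat_vec[of _ n n _ n] assoc_mult_mat_vec[of W n n A n])
  then show ?thesis
    using cscalar_prod_adj_mult[OF v, of "A *\<^sub>v (adj W *\<^sub>v v)"] A adj_mult_vec_carrier[OF v] by simp
qed

lemma adj_mult_vec_nonzero:
  assumes v: "v \<in> carrier_vec n" "v \<noteq> 0\<^sub>v n"
  shows "adj W *\<^sub>v v \<noteq> 0\<^sub>v n"
proof
  assume "adj W *\<^sub>v v = 0\<^sub>v n"
  moreover have "(W * adj W) *\<^sub>v v = W *\<^sub>v (adj W *\<^sub>v v)"
    using v unitary_cancel[OF W] by (intro assoc_mult_mat_vec) auto
  ultimately have "v = W *\<^sub>v 0\<^sub>v n" using v unitary_cancel[OF W] by simp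
  also have "\<dots> = 0\<^sub>v n" using unitary_cancel[OF W] by (intro eq_vecI) auto
  finally show False using v by simp
qed

lemma density_unitary_conj: "density n \<sigma> \<Longrightarrow> density n (W * \<sigma> * adj W)"
  unfolding density_def psd_def
  using hermitian_unitary_conj quadratic_form_unitary_conj adj_mult_vec_carrier hermitianD(1)
  by (simp add: mtrace_unitary_conj)

lemma posdef_unitary_conj: "posdef n \<sigma> \<Longrightarrow> posdef n (W * \<sigma> * adj W)"
  unfolding posdef_def
  using hermitian_unitary_conj quadratic_form_unitary_conj adj_mult_vec_carrier adj_mult_vec_nonzero
    hermitianD(1)
  by simp

end

lemma mtrace_jump_term_adj:
  assumes J: "J \<in> carrier_mat n n" and Y: "Y \<in> carrier_mat n n" and A: "A \<in> carrier_mat n n"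
  shows "mtrace (adj (adj J * Y * J - (1/2) \<cdot>\<^sub>m (adj J * J * Y + Y * (adj J * J))) * A)
       = mtrace (adj Y * (J * A * adj J - (1/2) \<cdot>\<^sub>m (adj J * J * A + A * (adj J * J))))"
proof -
  have aJ: "adj J \<in> carrier_mat n n" and aY: "adj Y \<in> carrier_mat n n" using J Y by auto
  have adjT: "adj (adj J * Y * J - (1/2) \<cdot>\<^sub>m (adj J * J * Y + Y * (adj J * J)))
     = adj J * adj Y * J - (1/2) \<cdot>\<^sub>m (adj Y * (adj J * J) + adj J * J * adj Y)"
    using J Y aJ aY
    by (simp add: adj_minus[of _ n n] adj_smult adj_add[of _ n n] adj_mult[of _ n n _ n] assoc_mult_mat_sq[of _ n])
  have t1: "mtrace (adj J * adj Y * J * A) = mtrace (adj Y * (J * A * adj J))"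
  proof -
    have "mtrace (adj J * adj Y * J * A) = mtrace (adj J * (adj Y * J * A))"
      using J Y A aJ aY by (simp add: assoc_mult_mat_sq[of _ n])
    also have "\<dots> = mtrace ((adj Y * J * A) * adj J)"
      by (rule mtrace_mult_comm) (use J A aJ aY in auto)
    also have "\<dots> = mtrace (adj Y * (J * A * adj J))" using J Y A aJ aY by (simp add: assoc_mult_mat_sq[of _ n])
    finally show ?thesis .
  qed
  have t2: "mtrace (adj Y * (adj J * J) * A) = mtrace (adj Y * (adj J * J * A))"
    using J Y A aJ aY by (simp add: assoc_mult_mat_sq[of _ n])
  have t3: "mtrace (adj J * J * adj Y * A) = mtrace (adj Y * (A * (adj J * J)))"
  proof -
    have "mtrace (adj J * J * adj Y * A) = mtrace ((adj J * J) * (adj Y * A))"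
      using J Y A aJ aY by (simp add: assoc_mult_mat_sq[of _ n])
    also have "\<dots> = mtrace ((adj Y * A) * (adj J * J))"
      by (rule mtrace_mult_comm) (use J A aJ aY in auto)
    also have "\<dots> = mtrace (adj Y * (A * (adj J * J)))" using J Y A aJ aY by (simp add: assoc_mult_mat_sq[of _ n])
    finally show ?thesis .
  qed
  show ?thesis unfolding adjT using J Y A aJ aY
    by (simp add: mtrace_mult_minus_left[of A n] mtrace_mult_smult_left[of A n] mtrace_mult_add_left[of A n]
        mtrace_mult_minus_right[of "adj Y" n] mtrace_mult_smult_right[of "adj Y" n]
        mtrace_mult_add_right[of "adj Y" n] t1 t2 t3)
qed

lemma mtrace_commutator_adj:
  assumes K: "K \<in> carrier_mat n n" and hK: "adj K = K" and Y: "Y \<in> carrier_mat n n" and A: "A \<in> carrier_mat n n"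
  shows "mtrace (adj (\<i> \<cdot>\<^sub>m (K * Y - Y * K)) * A) = mtrace (adj Y * ((- \<i>) \<cdot>\<^sub>m (K * A - A * K)))"
proof -
  have aY: "adj Y \<in> carrier_mat n n" using Y by auto
  have a: "adj (\<i> \<cdot>\<^sub>m (K * Y - Y * K)) = (- \<i>) \<cdot>\<^sub>m (adj Y * K - K * adj Y)"
    using K Y hK by (simp add: adj_smult adj_minus[of _ n n] adj_mult[of _ n n _ n])
  have t1: "mtrace (K * adj Y * A) = mtrace (adj Y * (A * K))"
  proof -
    have "mtrace (K * adj Y * A) = mtrace (K * (adj Y * A))" using K aY A by (simp add: assoc_mult_mat_sq[of _ n])
    also have "\<dots> = mtrace ((adj Y * A) * K)" by (rule mtrace_mult_comm) (use K aY A in auto)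
    also have "\<dots> = mtrace (adj Y * (A * K))" using K aY A by (simp add: assoc_mult_mat_sq[of _ n])
    finally show ?thesis .
  qed
  have t2: "mtrace (adj Y * K * A) = mtrace (adj Y * (K * A))" using K aY A by (simp add: assoc_mult_mat_sq[of _ n])
  have c1: "adj Y * K - K * adj Y \<in> carrier_mat n n" and c2: "K * A - A * K \<in> carrier_mat n n"
    using K aY A by (auto simp: minus_carrier_mat)
  have "mtrace ((- \<i>) \<cdot>\<^sub>m (adj Y * K - K * adj Y) * A) = (- \<i>) * mtrace ((adj Y * K - K * adj Y) * A)"
    by (rule mtrace_mult_smult_left[OF A c1])
  also have "mtrace ((adj Y * K - K * adj Y) * A) = mtrace (adj Y * K * A) - mtrace (K * adj Y * A)"
    by (rule mtrace_mult_minus_left[OF A]) (use K aY in auto)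
  also have "\<dots> = mtrace (adj Y * (K * A - A * K))"
    unfolding t1 t2 by (rule mtrace_mult_minus_right[symmetric]) (use K aY A in auto)
  also have "(- \<i>) * \<dots> = mtrace (adj Y * ((- \<i>) \<cdot>\<^sub>m (K * A - A * K)))"
    by (rule mtrace_mult_smult_right[symmetric, OF aY c2])
  finally show ?thesis unfolding a .
qed

definition dissipator :: "nat \<Rightarrow> complex mat list \<Rightarrow> complex mat \<Rightarrow> complex mat" where
  "dissipator n Js A = foldr (\<lambda>J acc. (J * A * adj J - (1/2) \<cdot>\<^sub>m (adj J * J * A + A * (adj J * J))) + acc)
     Js (0\<^sub>m n n)"

definition dissipator_dual :: "nat \<Rightarrow> complex mat list \<Rightarrow> complex mat \<Rightarrow> complex mat" where
  "dissipator_dual n Js Y = foldr (\<lambda>J acc. (adj J * Y * J - (1/2) \<cdot>\<^sub>m (adj J * J * Y + Y * (adj J * J))) + acc)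
     Js (0\<^sub>m n n)"

lemma mtrace_dissipator_dual:
  assumes Js: "set Js \<subseteq> carrier_mat n n" and Y: "Y \<in> carrier_mat n n" and A: "A \<in> carrier_mat n n"
  shows "dissipator n Js A \<in> carrier_mat n n \<and> dissipator_dual n Js Y \<in> carrier_mat n n \<and>
    mtrace (adj (dissipator_dual n Js Y) * A) = mtrace (adj Y * dissipator n Js A)"
  using Js
proof (induction Js)
  case Nil
  then show ?case unfolding dissipator_def dissipator_dual_def using Y A by (simp add: mtrace_def)
next
  case (Cons J Js)
  then have J: "J \<in> carrier_mat n n" and IH: "dissipator n Js A \<in> carrier_mat n n"
    "dissipator_dual n Js Y \<in> carrier_mat n n"
    "mtrace (adj (dissipator_dual n Js Y) * A) = mtrace (adj Y * dissipator n Js A)" by auto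
  define T where "T = adj J * Y * J - (1/2) \<cdot>\<^sub>m (adj J * J * Y + Y * (adj J * J))"
  define R where "R = J * A * adj J - (1/2) \<cdot>\<^sub>m (adj J * J * A + A * (adj J * J))"
  have Tc: "T \<in> carrier_mat n n" and Rc: "R \<in> carrier_mat n n"
    unfolding T_def R_def using J Y A by (auto simp: minus_carrier_mat)
  have D: "dissipator n (J # Js) A = R + dissipator n Js A"
    and D': "dissipator_dual n (J # Js) Y = T + dissipator_dual n Js Y"
    unfolding dissipator_def dissipator_dual_def R_def T_def by simp_all
  have "mtrace (adj (dissipator_dual n (J # Js) Y) * A)
      = mtrace (adj T * A) + mtrace (adj (dissipator_dual n Js Y) * A)"
    unfolding D' using Tc IH A by (simp add: adj_add[of _ n n] mtrace_mult_add_left[of A n])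
  also have "mtrace (adj T * A) = mtrace (adj Y * R)"
    unfolding T_def R_def by (rule mtrace_jump_term_adj[OF J Y A])
  finally show ?case
    unfolding D D' IH(3) using Tc Rc IH Y by (simp add: mtrace_mult_add_right[of "adj Y" n])
qed

lemma lindbladian_dissipator_form:
  "lindbladian n L \<Longrightarrow> \<exists>K Js. hermitian n K \<and> set Js \<subseteq> carrier_mat n n \<and>
    (\<forall>\<rho> \<in> carrier_mat n n. L \<rho> = (- \<i>) \<cdot>\<^sub>m (K * \<rho> - \<rho> * K) + dissipator n Js \<rho>)"
  unfolding lindbladian_def dissipator_def .

lemma lindbladian_carrier:
  assumes L: "lindbladian n L" and A: "A \<in> carrier_mat n n"
  shows "L A \<in> carrier_mat n n"
proof -
  obtain K Js where "hermitian n K" "set Js \<subseteq> carrier_mat n n"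
    and "\<forall>\<rho> \<in> carrier_mat n n. L \<rho> = (- \<i>) \<cdot>\<^sub>m (K * \<rho> - \<rho> * K) + dissipator n Js \<rho>"
    using lindbladian_dissipator_form[OF L] by blast
  then show ?thesis using mtrace_dissipator_dual[of Js n A A] A by (simp add: hermitianD minus_carrier_mat)
qed

lemma hs_adj_eqI:
  assumes Z: "Z \<in> carrier_mat n n"
    and eq: "\<And>A. A \<in> carrier_mat n n \<Longrightarrow> mtrace (adj Z * A) = mtrace (adj Y * L A)"
  shows "hs_adj n L Y = Z"
  unfolding hs_adj_def
proof (rule the_equality)
  fix Z' assume "Z' \<in> carrier_mat n n \<and> (\<forall>A \<in> carrier_mat n n. mtrace (adj Z' * A) = mtrace (adj Y * L A))"
  then show "Z' = Z" using eq by (intro eq_mat_if_mtrace_adj_mult_eq[OF _ Z]) auto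
qed (use Z eq in blast)

lemma hs_adj_lindbladian:
  assumes L: "lindbladian n L" and Y: "Y \<in> carrier_mat n n"
  shows "hs_adj n L Y \<in> carrier_mat n n"
    and "A \<in> carrier_mat n n \<Longrightarrow> mtrace (adj (hs_adj n L Y) * A) = mtrace (adj Y * L A)"
proof -
  obtain K Js where hK: "hermitian n K" and Js: "set Js \<subseteq> carrier_mat n n"
    and LA: "\<forall>\<rho> \<in> carrier_mat n n. L \<rho> = (- \<i>) \<cdot>\<^sub>m (K * \<rho> - \<rho> * K) + dissipator n Js \<rho>"
    using lindbladian_dissipator_form[OF L] by blast
  have K: "K \<in> carrier_mat n n" and aK: "adj K = K" using hK by (auto simp: hermitian_def)
  define Z where "Z = \<i> \<cdot>\<^sub>m (K * Y - Y * K) + dissipator_dual n Js Y"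
  have Zc: "Z \<in> carrier_mat n n" unfolding Z_def using mtrace_dissipator_dual[OF Js Y Y] K Y by simp
  have Z: "mtrace (adj Z * A) = mtrace (adj Y * L A)" if A: "A \<in> carrier_mat n n" for A
  proof -
    have "mtrace (adj Z * A)
        = mtrace (adj (\<i> \<cdot>\<^sub>m (K * Y - Y * K)) * A) + mtrace (adj (dissipator_dual n Js Y) * A)"
      unfolding Z_def using mtrace_dissipator_dual[OF Js Y A] K Y A
      by (simp add: adj_add[of _ n n] mtrace_mult_add_left[of A n] minus_carrier_mat)
    also have "\<dots> = mtrace (adj Y * ((- \<i>) \<cdot>\<^sub>m (K * A - A * K))) + mtrace (adj Y * dissipator n Js A)"
      using mtrace_commutator_adj[OF K aK Y A] mtrace_dissipator_dual[OF Js Y A] by simp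
    also have "\<dots> = mtrace (adj Y * L A)"
      using LA A mtrace_dissipator_dual[OF Js Y A] K A Y
      by (simp add: mtrace_mult_add_right[of "adj Y" n] minus_carrier_mat)
    finally show ?thesis .
  qed
  have "hs_adj n L Y = Z" using Zc Z by (rule hs_adj_eqI)
  then show "hs_adj n L Y \<in> carrier_mat n n" "A \<in> carrier_mat n n \<Longrightarrow> mtrace (adj (hs_adj n L Y) * A) = mtrace (adj Y * L A)"
    using Zc Z by simp_all
qed

section \<open>Convolution factors and \<open>L\<^sup>1\<close> bounds\<close>

lemma integrable_convolution_factor_kernel:
  fixes fd fd' g :: "real \<Rightarrow> real" and h :: "real \<Rightarrow> complex"
  assumes fd_nn: "\<forall>r. fd r \<ge> 0" and fd'_meas: "fd' \<in> borel_measurable lborel" and fd'_nn: "\<forall>r. fd' r \<ge> 0"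
    and g_nn: "\<forall>r. g r \<ge> 0" and g_meas: "g \<in> borel_measurable lborel"
    and h_meas: "h \<in> borel_measurable lborel"
    and factor: "\<forall>s. ennreal (fd s) = (\<integral>\<^sup>+ r. ennreal (g r * fd' (s - r)) \<partial>lborel)"
    and int: "integrable lborel (\<lambda>r. complex_of_real (fd r) * h (- r))"
  shows "integrable (lborel \<Otimes>\<^sub>M lborel) (\<lambda>(u,r). complex_of_real (g u * fd' (r - u)) * h (- r))"
proof -
  note [measurable] = fd'_meas g_meas h_meas
  define F where "F u r = complex_of_real (g u * fd' (r - u)) * h (- r)" for u r
  have Fm [measurable]: "(\<lambda>(u,r). F u r) \<in> borel_measurable (lborel \<Otimes>\<^sub>M lborel)"
    unfolding F_def by measurable
  have normF: "norm (F u r) = g u * fd' (r - u) * norm (h (- r))" for u r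
    unfolding F_def using g_nn fd'_nn by (simp add: norm_mult abs_mult)
  have "(\<integral>\<^sup>+ x. ennreal (norm ((\<lambda>(u,r). F u r) x)) \<partial>(lborel \<Otimes>\<^sub>M lborel))
      = (\<integral>\<^sup>+ r. (\<integral>\<^sup>+ u. ennreal (norm (F u r)) \<partial>lborel) \<partial>lborel)"
    using lborel_pair.nn_integral_snd[of "\<lambda>(u,r). ennreal (norm (F u r))"]
    by (simp add: case_prod_beta')
  also have "\<dots> = (\<integral>\<^sup>+ r. (\<integral>\<^sup>+ u. ennreal (g u * fd' (r - u)) \<partial>lborel) * ennreal (norm (h (- r))) \<partial>lborel)"
    unfolding normF using g_nn fd'_nn
    by (intro nn_integral_cong, subst nn_integral_multc[symmetric], measurable,
        intro nn_integral_cong, simp add: ennreal_mult)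
  also have "\<dots> = (\<integral>\<^sup>+ r. ennreal (norm (complex_of_real (fd r) * h (- r))) \<partial>lborel)"
    using fd_nn by (intro nn_integral_cong) (simp add: factor[rule_format, symmetric] norm_mult ennreal_mult)
  also have "\<dots> < \<infinity>" using int unfolding integrable_iff_bounded by simp
  finally show ?thesis unfolding F_def[abs_def] by (intro integrableI_bounded Fm[unfolded F_def])
qed

text \<open>If \<open>e = f \<star> h\<close>, \<open>e' = f' \<star> h\<close> and \<open>f = g \<star> f'\<close>, then \<open>e = g \<star> e'\<close> by Fubini; at the origin
  this reads \<open>e(0) = \<integral> g(u) e'(-u) du\<close>.\<close>

lemma convolution_factor_at_0:
  fixes fd fd' g :: "real \<Rightarrow> real" and h e e' :: "real \<Rightarrow> complex"
  assumes fd_nn: "\<forall>r. fd r \<ge> 0" and fd'_meas: "fd' \<in> borel_measurable lborel" and fd'_nn: "\<forall>r. fd' r \<ge> 0"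
    and g_nn: "\<forall>r. g r \<ge> 0" and g_meas: "g \<in> borel_measurable lborel"
    and factor: "\<forall>s. ennreal (fd s) = (\<integral>\<^sup>+ r. ennreal (g r * fd' (s - r)) \<partial>lborel)"
    and conv: "is_convolution fd h e" and conv': "is_convolution fd' h e'"
  shows "integrable lborel (\<lambda>u. complex_of_real (g u) * e' (- u))"
    and "e 0 = (LINT u|lborel. complex_of_real (g u) * e' (- u))"
proof -
  have h_meas: "h \<in> borel_measurable lborel" using conv unfolding is_convolution_def by simp
  define F where "F u r = complex_of_real (g u * fd' (r - u)) * h (- r)" for u r
  have "integrable lborel (\<lambda>r. complex_of_real (fd r) * h (0 - r)) \<and>
      e 0 = (LINT r|lborel. complex_of_real (fd r) * h (0 - r))"
    using conv unfolding is_convolution_def by blast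
  then have e0: "e 0 = (LINT r|lborel. complex_of_real (fd r) * h (- r))"
    and ie0: "integrable lborel (\<lambda>r. complex_of_real (fd r) * h (- r))" by auto
  have intF: "integrable (lborel \<Otimes>\<^sub>M lborel) (\<lambda>(u,r). F u r)"
    unfolding F_def
    by (rule integrable_convolution_factor_kernel[OF fd_nn fd'_meas fd'_nn g_nn g_meas h_meas factor ie0])
  have inner_u: "(LINT u|lborel. F u r) = complex_of_real (fd r) * h (- r)" for r
  proof -
    have "(LINT u|lborel. g u * fd' (r - u)) = enn2real (\<integral>\<^sup>+ u. ennreal (g u * fd' (r - u)) \<partial>lborel)"
      using g_nn fd'_nn g_meas fd'_meas by (intro integral_eq_nn_integral) auto
    also have "\<dots> = fd r" unfolding factor[rule_format, symmetric] using fd_nn by simp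
    finally show ?thesis
      unfolding F_def integral_mult_left_zero integral_complex_of_real by simp
  qed
  have inner_r: "(LINT r|lborel. F u r) = complex_of_real (g u) * e' (- u)" for u
  proof -
    have "(LINT r|lborel. F u r) = complex_of_real (g u) * (LINT r|lborel. complex_of_real (fd' (r - u)) * h (- r))"
      unfolding F_def by (simp add: mult.assoc)
    also have "(LINT r|lborel. complex_of_real (fd' (r - u)) * h (- r))
        = (LINT x|lborel. complex_of_real (fd' x) * h (- u - x))"
      using lborel_integral_real_affine[of 1 "\<lambda>r. complex_of_real (fd' (r - u)) * h (- r)" u] by simp
    also have "\<dots> = e' (- u)" using conv' unfolding is_convolution_def by simp
    finally show ?thesis .
  qed
  show "integrable lborel (\<lambda>u. complex_of_real (g u) * e' (- u))"
    using lborel_pair.integrable_fst[OF intF] unfolding inner_r .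
  show "e 0 = (LINT u|lborel. complex_of_real (g u) * e' (- u))"
    using lborel_pair.Fubini_integral[OF intF] unfolding inner_u inner_r e0 .
qed

lemma integral_Re_divide:
  assumes "integrable M (\<lambda>u. complex_of_real (g u) * e u)"
  shows "integrable M (\<lambda>u. g u * (Re (e u) / c))"
    and "Re (LINT u|M. complex_of_real (g u) * e u) / c = (LINT u|M. g u * (Re (e u) / c))"
proof -
  have eq: "(\<lambda>u. g u * (Re (e u) / c)) = (\<lambda>u. Re (complex_of_real (g u) * e u) / c)" by auto
  show "integrable M (\<lambda>u. g u * (Re (e u) / c))"
    unfolding eq by (intro integrable_divide_zero integrable_Re assms)
  show "Re (LINT u|M. complex_of_real (g u) * e u) / c = (LINT u|M. g u * (Re (e u) / c))"
    unfolding eq integral_divide_zero integral_Re[OF assms] ..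
qed

lemma l1_norm_integrable:
  assumes "\<forall>r. g r \<ge> 0" "integrable lborel g"
  shows "l1_norm g = ereal (LINT r|lborel. g r)"
  using assms nn_integral_eq_integral[of lborel g] integral_nonneg_AE[of g lborel]
  by (simp add: l1_norm_def)

lemma l1_norm_not_integrable:
  assumes "\<forall>r. g r \<ge> 0" "g \<in> borel_measurable lborel" "\<not> integrable lborel g"
  shows "l1_norm g = \<infinity>"
proof -
  have "(\<integral>\<^sup>+ r. ennreal (g r) \<partial>lborel) = \<infinity>"
  proof (rule ccontr)
    assume "(\<integral>\<^sup>+ r. ennreal (g r) \<partial>lborel) \<noteq> \<infinity>"
    then obtain x where "(\<integral>\<^sup>+ r. ennreal (g r) \<partial>lborel) = ennreal x"
      by (cases "\<integral>\<^sup>+ r. ennreal (g r) \<partial>lborel") auto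
    then have "integrable lborel g" using assms(1,2) by (intro integrableI_nn_integral_finite) auto
    then show False using assms(3) by simp
  qed
  then show ?thesis using assms(1) unfolding l1_norm_def by simp
qed

lemma l1_norm_eq_0_AE:
  assumes "\<forall>r. g r \<ge> 0" "g \<in> borel_measurable lborel" "l1_norm g = 0"
  shows "AE r in lborel. g r = 0"
proof -
  have "(\<integral>\<^sup>+ r. ennreal (g r) \<partial>lborel) = e2ennreal (l1_norm g)"
    using assms(1) unfolding l1_norm_def by simp
  also have "\<dots> = 0" using assms(3) by (simp add: e2ennreal_neg)
  finally have "(\<integral>\<^sup>+ r. ennreal (g r) \<partial>lborel) = 0" .
  then show ?thesis using assms(1,2) by (subst (asm) nn_integral_0_iff_AE) auto
qed

lemma integrable_if_mult_bounded_below: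
  fixes g h :: "real \<Rightarrow> real" and a :: real
  assumes g_nn: "\<forall>r. g r \<ge> 0" and g_meas: "g \<in> borel_measurable lborel"
    and int: "integrable lborel (\<lambda>u. g u * h u)" and a: "a > 0" "\<forall>u. a \<le> h u"
  shows "integrable lborel g"
proof -
  have i: "integrable lborel (\<lambda>u. g u * h u / a)" by (rule integrable_divide_zero) (rule int)
  have "norm (g u) \<le> norm (g u * h u / a)" for u
  proof -
    have "g u * a \<le> g u * h u" using g_nn a by (intro mult_left_mono) auto
    then have "g u \<le> g u * h u / a" using a by (simp add: pos_le_divide_eq)
    also have "\<dots> \<le> norm (g u * h u / a)" unfolding real_norm_def by (rule abs_ge_self)
    finally show ?thesis using g_nn unfolding real_norm_def by (simp add: abs_of_nonneg)
  qed
  then show ?thesis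
    using Bochner_Integration.integrable_bound[OF i g_meas] by blast
qed

text \<open>The extended-real conventions \<open>\<infinity> \<cdot> 0 = 0\<close> and \<open>\<infinity> \<cdot> a = -\<infinity>\<close> for \<open>a < 0\<close> force the case
  analysis.\<close>

lemma l1_norm_mult_le_integral:
  fixes g h :: "real \<Rightarrow> real" and c :: ereal
  assumes g_nn: "\<forall>r. g r \<ge> 0" and g_meas: "g \<in> borel_measurable lborel"
    and int: "integrable lborel (\<lambda>u. g u * h u)" and hc: "\<forall>u. c \<le> ereal (h u)"
  shows "l1_norm g * c \<le> ereal (LINT u|lborel. g u * h u)"
proof (cases c)
  case PInf
  then show ?thesis using hc by (metis ereal_infty_less_eq(1) PInfty_neq_ereal(1))
next
  case MInf
  show ?thesis
  proof (cases "l1_norm g = 0")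
    case True
    then have "AE u in lborel. g u * h u = 0" using l1_norm_eq_0_AE[OF g_nn g_meas] by auto
    then show ?thesis using True by (simp add: integral_eq_zero_AE)
  next
    case False
    then have "l1_norm g > 0" using enn2ereal_nonneg unfolding l1_norm_def by (metis order_less_le)
    then show ?thesis using MInf by simp
  qed
next
  case (real a)
  then have ha: "\<forall>u. a \<le> h u" using hc by simp
  show ?thesis
  proof (cases "integrable lborel g")
    case True
    have "(LINT u|lborel. g u * a) \<le> (LINT u|lborel. g u * h u)"
      using True g_nn ha by (intro integral_mono[OF _ int]) (auto intro!: mult_left_mono)
    then show ?thesis using real l1_norm_integrable[OF g_nn True] by simp
  next
    case False
    then have l1: "l1_norm g = \<infinity>" by (rule l1_norm_not_integrable[OF g_nn g_meas])
    consider "a < 0" | "a = 0" | "a > 0" by linarith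
    then show ?thesis
    proof cases
      case 2
      have "0 \<le> (LINT u|lborel. g u * h u)" using g_nn ha 2 by (intro integral_nonneg_AE) auto
      then show ?thesis using l1 real 2 by (simp add: zero_ereal_def[symmetric])
    next
      case 3
      then show ?thesis using integrable_if_mult_bounded_below[OF g_nn g_meas int 3 ha] False by simp
    qed (use l1 real in simp)
  qed
qed

lemma l1_norm_mult_INF_le:
  fixes R R' :: "'a \<Rightarrow> real" and \<phi> :: "real \<Rightarrow> 'a \<Rightarrow> 'a"
  assumes g_nn: "\<forall>r. g r \<ge> 0" and g_meas: "g \<in> borel_measurable lborel"
    and closed: "\<And>x u. x \<in> A \<Longrightarrow> \<phi> u x \<in> A"
    and int: "\<And>x. x \<in> A \<Longrightarrow> integrable lborel (\<lambda>u. g u * R' (\<phi> u x))"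
    and eq: "\<And>x. x \<in> A \<Longrightarrow> R x = (LINT u|lborel. g u * R' (\<phi> u x))"
  shows "l1_norm g * (INF x\<in>A. ereal (R' x)) \<le> (INF x\<in>A. ereal (R x))"
proof (rule INF_greatest)
  fix x assume x: "x \<in> A"
  have "(INF y\<in>A. ereal (R' y)) \<le> ereal (R' (\<phi> u x))" for u
    by (rule INF_lower) (rule closed[OF x])
  then have "\<forall>u. (INF y\<in>A. ereal (R' y)) \<le> ereal (R' (\<phi> u x))" ..
  then show "l1_norm g * (INF y\<in>A. ereal (R' y)) \<le> ereal (R x)"
    unfolding eq[OF x] by (rule l1_norm_mult_le_integral[OF g_nn g_meas int[OF x]])
qed

text \<open>\<open>H = U diag(d) U\<^sup>\<dagger>\<close>; every operator built from \<open>H\<close> by functional calculus is diagonal in the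
  same basis, which gives all commutation relations below for free.\<close>

locale gibbs_setting =
  fixes n :: nat and H :: "complex mat" and \<beta> :: real and U :: "complex mat" and d :: "nat \<Rightarrow> real"
  assumes U: "unitary n U" and H_eq: "H = unitary_diag n U (\<lambda>i. complex_of_real (d i))" and n_pos: "n > 0"
begin

abbreviation rho where "rho \<equiv> gibbs n \<beta> H"

definition partition :: real where "partition = (\<Sum>j<n. exp (- \<beta> * d j))"
definition boltzmann :: "nat \<Rightarrow> real" where "boltzmann i = exp (- \<beta> * d i) / partition"
definition sqrt_rho where "sqrt_rho = unitary_diag n U (\<lambda>i. complex_of_real (sqrt (boltzmann i)))"
definition inv_sqrt_rho where "inv_sqrt_rho = unitary_diag n U (\<lambda>i. complex_of_real (1 / sqrt (boltzmann i)))"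
definition log_rho where "log_rho = unitary_diag n U (\<lambda>i. complex_of_real (ln (boltzmann i)))"
definition evol :: "real \<Rightarrow> complex mat" where "evol t = unitary_diag n U (\<lambda>i. exp (\<i> * complex_of_real (t * d i)))"

lemma partition_pos: "partition > 0"
  unfolding partition_def using n_pos by (intro sum_pos) auto

lemma boltzmann_pos: "boltzmann i > 0"
  unfolding boltzmann_def using partition_pos by simp

lemma gibbs_eq: "rho = unitary_diag n U (\<lambda>i. complex_of_real (boltzmann i))"
proof -
  have "matfun n (\<lambda>x. complex_of_real (exp (- \<beta> * x))) H
      = unitary_diag n U (\<lambda>i. complex_of_real (exp (- \<beta> * d i)))"
    by (rule matfun_unitary_diag[OF U H_eq])
  moreover have "mtrace (unitary_diag n U (\<lambda>i. complex_of_real (exp (- \<beta> * d i)))) = complex_of_real partition"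
    unfolding partition_def using U by (simp add: mtrace_unitary_diag)
  ultimately show ?thesis unfolding gibbs_def using U by (simp add: smult_unitary_diag boltzmann_def)
qed

lemma msqrt_gibbs: "msqrt n rho = sqrt_rho"
  unfolding msqrt_def sqrt_rho_def by (rule matfun_unitary_diag[OF U gibbs_eq])

lemma mlog_gibbs: "mlog n rho = log_rho"
  unfolding mlog_def log_rho_def by (rule matfun_unitary_diag[OF U gibbs_eq])

lemma carriers [simp]: "sqrt_rho \<in> carrier_mat n n" "inv_sqrt_rho \<in> carrier_mat n n"
  "log_rho \<in> carrier_mat n n" "rho \<in> carrier_mat n n"
  unfolding sqrt_rho_def inv_sqrt_rho_def log_rho_def gibbs_eq using U by auto

lemma hermitian_log_rho: "hermitian n log_rho"
  unfolding log_rho_def by (rule hermitian_unitary_diag[OF U])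

lemma sqrt_rho_inverse: "sqrt_rho * inv_sqrt_rho = 1\<^sub>m n" "inv_sqrt_rho * sqrt_rho = 1\<^sub>m n"
proof -
  have "complex_of_real (sqrt (boltzmann i)) * complex_of_real (1 / sqrt (boltzmann i)) = 1" for i
    using boltzmann_pos[of i] by (simp flip: of_real_mult)
  then show "sqrt_rho * inv_sqrt_rho = 1\<^sub>m n" "inv_sqrt_rho * sqrt_rho = 1\<^sub>m n"
    unfolding sqrt_rho_def inv_sqrt_rho_def using U by (simp_all add: unitary_diag_mult unitary_diag_one mult.commute)
qed

lemma unitary_evol: "unitary n (evol t)"
  unfolding evol_def using U by (intro unitary_unitary_diag) (auto simp: exp_cnj exp_add[symmetric])

lemma heis_eq: "heis n H t X = evol t * X * adj (evol t)"
proof -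
  have "cnj (exp (\<i> * complex_of_real (t * d i))) = exp (- \<i> * complex_of_real (t * d i))" for i
    by (simp add: exp_cnj)
  then show ?thesis
    unfolding heis_def evol_def matfun_unitary_diag[OF U H_eq] using U by (simp add: adj_unitary_diag)
qed

lemma heis_0: "X \<in> carrier_mat n n \<Longrightarrow> heis n H 0 X = X"
  unfolding heis_eq evol_def using U by (simp add: unitary_diag_one)

lemma evol_commute: "sqrt_rho * evol t = evol t * sqrt_rho" "inv_sqrt_rho * evol t = evol t * inv_sqrt_rho"
  "log_rho * evol t = evol t * log_rho" "rho * evol t = evol t * rho"
  unfolding sqrt_rho_def inv_sqrt_rho_def log_rho_def gibbs_eq evol_def using U by (auto intro: unitary_diag_commute)

lemma heis_fixes: "heis n H t inv_sqrt_rho = inv_sqrt_rho" "heis n H t log_rho = log_rho" "heis n H t rho = rho"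
  unfolding heis_eq by (auto intro: unitary_conj_commuting[OF unitary_evol] evol_commute)

lemma kms_eq: "kms n rho X Y = mtrace (sqrt_rho * adj X * sqrt_rho * Y)"
  unfolding kms_def msqrt_gibbs ..

lemma kms_heis:
  "X \<in> carrier_mat n n \<Longrightarrow> Y \<in> carrier_mat n n \<Longrightarrow> kms n rho (heis n H t X) (heis n H t Y) = kms n rho X Y"
  unfolding kms_eq heis_eq by (rule mtrace_sandwich_unitary_conj[OF unitary_evol carriers(1) evol_commute(1)])

end

section \<open>Comparison of spectral gaps\<close>

context gibbs_setting
begin

definition centered :: "complex mat \<Rightarrow> complex mat" where
  "centered X = X - kms n rho (1\<^sub>m n) X \<cdot>\<^sub>m 1\<^sub>m n"

definition gap_ratio :: "(complex mat \<Rightarrow> complex mat) \<Rightarrow> complex mat \<Rightarrow> real" where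
  "gap_ratio L X = Re (- kms n rho X (hs_adj n L X)) / Re (kms n rho (centered X) (centered X))"

lemma spectral_gap_eq_INF:
  "spectral_gap n rho L = (INF X\<in>{X. hermitian n X \<and> centered X \<noteq> 0\<^sub>m n n}. ereal (gap_ratio L X))"
  unfolding spectral_gap_def gap_ratio_def centered_def by (simp add: setcompr_eq_image)

lemma centered_carrier: "X \<in> carrier_mat n n \<Longrightarrow> centered X \<in> carrier_mat n n"
  unfolding centered_def by (simp add: minus_carrier_mat)

lemma centered_heis:
  assumes X: "X \<in> carrier_mat n n"
  shows "centered (heis n H t X) = heis n H t (centered X)"
proof -
  have "kms n rho (1\<^sub>m n) (heis n H t X) = kms n rho (1\<^sub>m n) X"
    using kms_heis[OF one_carrier_mat X, of t] unitary_conj_one[OF unitary_evol] by (simp add: heis_eq)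
  then show ?thesis
    unfolding centered_def heis_eq using X
    by (simp add: unitary_conj_minus[OF unitary_evol] unitary_conj_smult[OF unitary_evol]
        unitary_conj_one[OF unitary_evol])
qed

lemma gap_ratio_heis:
  assumes X: "X \<in> carrier_mat n n"
  shows "Re (corr_E n \<beta> H L X X s) / Re (kms n rho (centered X) (centered X))
    = gap_ratio L (heis n H (s * \<beta>) X)"
  unfolding gap_ratio_def corr_E_def centered_heis[OF X] kms_heis[OF centered_carrier[OF X] centered_carrier[OF X]]
  by simp

lemma spectral_gap_domain_heis:
  assumes "hermitian n X" "centered X \<noteq> 0\<^sub>m n n"
  shows "hermitian n (heis n H t X)" "centered (heis n H t X) \<noteq> 0\<^sub>m n n"
proof -
  have X: "X \<in> carrier_mat n n" using assms(1) by (rule hermitianD)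
  show "hermitian n (heis n H t X)" unfolding heis_eq by (rule hermitian_unitary_conj[OF unitary_evol assms(1)])
  show "centered (heis n H t X) \<noteq> 0\<^sub>m n n"
    unfolding centered_heis[OF X] unfolding heis_eq
    using unitary_conj_inj[OF unitary_evol centered_carrier[OF X] zero_carrier_mat] assms(2)
    by (auto simp: unitary_conj_zero[OF unitary_evol])
qed

text \<open>Of the convolution structure only the identity \<open>E(0) = \<integral> g(u) E'(-u) du\<close> between the
  correlation functions of \<open>L\<close> and \<open>L'\<close> is needed.\<close>

lemma spectral_gap_ge_l1_norm_mult:
  assumes g_nn: "\<forall>r. g r \<ge> 0" and g_meas: "g \<in> borel_measurable lborel"
    and transfer: "\<And>X Y. hermitian n X \<Longrightarrow> hermitian n Y \<Longrightarrow>
      integrable lborel (\<lambda>u. complex_of_real (g u) * corr_E n \<beta> H L' X Y (- u)) \<and>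
      corr_E n \<beta> H L X Y 0 = (LINT u|lborel. complex_of_real (g u) * corr_E n \<beta> H L' X Y (- u))"
  shows "l1_norm g * spectral_gap n rho L' \<le> spectral_gap n rho L"
  unfolding spectral_gap_eq_INF
proof (rule l1_norm_mult_INF_le[OF g_nn g_meas, where \<phi> = "\<lambda>u. heis n H (- u * \<beta>)"])
  fix X assume "X \<in> {X. hermitian n X \<and> centered X \<noteq> 0\<^sub>m n n}"
  then have hX: "hermitian n X" and X: "X \<in> carrier_mat n n" by (auto intro: hermitianD)
  let ?V = "Re (kms n rho (centered X) (centered X))"
  note int = transfer[OF hX hX, THEN conjunct1]
  have "gap_ratio L X = Re (corr_E n \<beta> H L X X 0) / ?V"
    using gap_ratio_heis[OF X, of L 0] heis_0[OF X] by simp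
  also have "\<dots> = (LINT u|lborel. g u * (Re (corr_E n \<beta> H L' X X (- u)) / ?V))"
    unfolding transfer[OF hX hX, THEN conjunct2] by (rule integral_Re_divide(2)[OF int])
  finally show "gap_ratio L X = (LINT u|lborel. g u * gap_ratio L' (heis n H (- u * \<beta>) X))"
    unfolding gap_ratio_heis[OF X] .
  show "integrable lborel (\<lambda>u. g u * gap_ratio L' (heis n H (- u * \<beta>) X))"
    using integral_Re_divide(1)[OF int, of ?V] unfolding gap_ratio_heis[OF X] .
qed (use spectral_gap_domain_heis in auto)

end

section \<open>Comparison of MLSI constants\<close>

lemma hermitian_minus: "hermitian n A \<Longrightarrow> hermitian n B \<Longrightarrow> hermitian n (A - B)"
  unfolding hermitian_def by (auto simp: adj_minus minus_carrier_mat)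

lemma hermitian_sandwich:
  "hermitian n A \<Longrightarrow> hermitian n S \<Longrightarrow> hermitian n (S * A * S)"
  unfolding hermitian_def by (auto simp: adj_mult[of _ n n _ n] assoc_mult_mat_sq[of _ n])

context gibbs_setting
begin

lemma hermitian_inv_sqrt_rho: "hermitian n inv_sqrt_rho"
  unfolding inv_sqrt_rho_def by (rule hermitian_unitary_diag[OF U])

definition mlsi_ratio :: "(complex mat \<Rightarrow> complex mat) \<Rightarrow> complex mat \<Rightarrow> real" where
  "mlsi_ratio L \<sigma> = entropy_prod n L rho \<sigma> / rel_entropy n \<sigma> rho"

lemma mlsi_const_eq_INF:
  "mlsi_const n rho L = (INF \<sigma>\<in>{\<sigma>. density n \<sigma> \<and> posdef n \<sigma> \<and> \<sigma> \<noteq> rho}. ereal (mlsi_ratio L \<sigma>))"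
  unfolding mlsi_const_def mlsi_ratio_def by (simp add: setcompr_eq_image)

text \<open>KMS symmetry moves \<open>L\<^sup>\<dagger>\<close> onto \<open>Z\<close>, and the factors \<open>\<rho>\<^sup>1\<^sup>/\<^sup>2\<close> of the KMS inner product cancel
  the \<open>\<rho>\<^sup>-\<^sup>1\<^sup>/\<^sup>2\<close> around \<open>\<sigma>\<close>.\<close>

lemma mtrace_lindbladian_eq_kms:
  assumes L: "lindbladian n L" and KS: "kms_symmetric n rho L"
    and \<sigma>: "\<sigma> \<in> carrier_mat n n" and hZ: "hermitian n Z"
  shows "mtrace (L \<sigma> * Z) = kms n rho Z (hs_adj n L (inv_sqrt_rho * \<sigma> * inv_sqrt_rho))"
proof -
  have Z: "Z \<in> carrier_mat n n" and aZ: "adj Z = Z" using hZ by (auto dest: hermitianD)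
  define A where "A = hs_adj n L Z"
  have aA: "adj A \<in> carrier_mat n n" unfolding A_def using hs_adj_lindbladian(1)[OF L Z] by simp
  have A: "mtrace (adj A * \<sigma>) = mtrace (adj Z * L \<sigma>)"
    unfolding A_def by (rule hs_adj_lindbladian(2)[OF L Z \<sigma>])
  have "kms n rho Z (hs_adj n L (inv_sqrt_rho * \<sigma> * inv_sqrt_rho)) = kms n rho A (inv_sqrt_rho * \<sigma> * inv_sqrt_rho)"
    using KS Z \<sigma> unfolding kms_symmetric_def A_def by simp
  also have "\<dots> = mtrace ((adj A * sqrt_rho * (inv_sqrt_rho * \<sigma> * inv_sqrt_rho)) * sqrt_rho)"
    unfolding kms_eq using aA \<sigma>
    by (simp add: mtrace_mult_comm[of sqrt_rho n n] assoc_mult_mat_sq[of _ n])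
  also have "(adj A * sqrt_rho * (inv_sqrt_rho * \<sigma> * inv_sqrt_rho)) * sqrt_rho
      = adj A * (sqrt_rho * inv_sqrt_rho) * \<sigma> * (inv_sqrt_rho * sqrt_rho)"
    using aA \<sigma> by (simp add: assoc_mult_mat_sq[of _ n])
  also have "mtrace \<dots> = mtrace (adj Z * L \<sigma>)"
    unfolding sqrt_rho_inverse using A \<sigma> by (simp add: right_mult_one_mat[OF aA])
  also have "\<dots> = mtrace (L \<sigma> * Z)"
    unfolding aZ using Z lindbladian_carrier[OF L \<sigma>] by (rule mtrace_mult_comm)
  finally show ?thesis ..
qed

lemma heis_log_quotient:
  assumes "hermitian n \<sigma>"
  shows "heis n H t (mlog n \<sigma> - log_rho) = mlog n (heis n H t \<sigma>) - log_rho"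
proof -
  have "mlog n \<sigma> \<in> carrier_mat n n" unfolding mlog_def using hermitian_matfun[OF assms] by (rule hermitianD)
  then show ?thesis
    using heis_fixes(2)[of t] unfolding heis_eq mlog_def
    by (simp add: unitary_conj_minus[OF unitary_evol] matfun_unitary_conj[OF assms unitary_evol])
qed

lemma heis_sandwich:
  assumes "\<sigma> \<in> carrier_mat n n"
  shows "heis n H t (inv_sqrt_rho * \<sigma> * inv_sqrt_rho) = inv_sqrt_rho * heis n H t \<sigma> * inv_sqrt_rho"
proof -
  have "heis n H t inv_sqrt_rho * heis n H t \<sigma> * heis n H t inv_sqrt_rho
      = heis n H t (inv_sqrt_rho * \<sigma> * inv_sqrt_rho)"
    unfolding heis_eq using assms by (simp add: unitary_conj_mult[OF unitary_evol])
  then show ?thesis by (simp only: heis_fixes)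
qed

lemma entropy_prod_heis:
  assumes L: "lindbladian n L" and KS: "kms_symmetric n rho L" and h\<sigma>: "hermitian n \<sigma>"
  shows "Re (corr_E n \<beta> H L (inv_sqrt_rho * \<sigma> * inv_sqrt_rho) (mlog n \<sigma> - log_rho) s)
    = entropy_prod n L rho (heis n H (s * \<beta>) \<sigma>)"
proof -
  let ?\<sigma>t = "heis n H (s * \<beta>) \<sigma>"
  have h\<sigma>t: "hermitian n ?\<sigma>t" unfolding heis_eq by (rule hermitian_unitary_conj[OF unitary_evol h\<sigma>])
  have hZt: "hermitian n (mlog n ?\<sigma>t - log_rho)"
    unfolding mlog_def by (intro hermitian_minus hermitian_matfun h\<sigma>t hermitian_log_rho)
  show ?thesis
    unfolding corr_E_def entropy_prod_def mlog_gibbs heis_log_quotient[OF h\<sigma>] heis_sandwich[OF hermitianD(1)[OF h\<sigma>]]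
      mtrace_lindbladian_eq_kms[OF L KS hermitianD(1)[OF h\<sigma>t] hZt] ..
qed

lemma rel_entropy_heis:
  assumes "hermitian n \<sigma>"
  shows "rel_entropy n (heis n H t \<sigma>) rho = rel_entropy n \<sigma> rho"
proof -
  have "hermitian n (mlog n \<sigma> - log_rho)"
    unfolding mlog_def by (intro hermitian_minus hermitian_matfun assms hermitian_log_rho)
  then have Z: "mlog n \<sigma> - log_rho \<in> carrier_mat n n" and \<sigma>: "\<sigma> \<in> carrier_mat n n"
    using assms by (auto dest: hermitianD)
  have "heis n H t \<sigma> * heis n H t (mlog n \<sigma> - log_rho) = heis n H t (\<sigma> * (mlog n \<sigma> - log_rho))"
    unfolding heis_eq by (rule unitary_conj_mult[OF unitary_evol \<sigma> Z])
  then show ?thesis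
    unfolding rel_entropy_def mlog_gibbs heis_log_quotient[OF assms, symmetric]
    by (simp add: heis_eq mtrace_unitary_conj[OF unitary_evol] \<sigma> Z)
qed

lemma mlsi_domain_heis:
  assumes "density n \<sigma>" "posdef n \<sigma>" "\<sigma> \<noteq> rho"
  shows "density n (heis n H t \<sigma>)" "posdef n (heis n H t \<sigma>)" "heis n H t \<sigma> \<noteq> rho"
proof -
  show "density n (heis n H t \<sigma>)" "posdef n (heis n H t \<sigma>)"
    unfolding heis_eq using assms(1,2)
    by (auto intro: density_unitary_conj[OF unitary_evol] posdef_unitary_conj[OF unitary_evol])
  have "\<sigma> \<in> carrier_mat n n" using assms(1) unfolding density_def psd_def by (auto dest: hermitianD)
  then show "heis n H t \<sigma> \<noteq> rho"
    using heis_fixes(3)[of t] assms(3) unitary_conj_inj[OF unitary_evol _ carriers(4)] unfolding heis_eq by metis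
qed

lemma mlsi_const_ge_l1_norm_mult:
  assumes g_nn: "\<forall>r. g r \<ge> 0" and g_meas: "g \<in> borel_measurable lborel"
    and L: "lindbladian n L" "kms_symmetric n rho L" and L': "lindbladian n L'" "kms_symmetric n rho L'"
    and transfer: "\<And>X Y. hermitian n X \<Longrightarrow> hermitian n Y \<Longrightarrow>
      integrable lborel (\<lambda>u. complex_of_real (g u) * corr_E n \<beta> H L' X Y (- u)) \<and>
      corr_E n \<beta> H L X Y 0 = (LINT u|lborel. complex_of_real (g u) * corr_E n \<beta> H L' X Y (- u))"
  shows "l1_norm g * mlsi_const n rho L' \<le> mlsi_const n rho L"
  unfolding mlsi_const_eq_INF
proof (rule l1_norm_mult_INF_le[OF g_nn g_meas, where \<phi> = "\<lambda>u. heis n H (- u * \<beta>)"])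
  fix \<sigma> assume "\<sigma> \<in> {\<sigma>. density n \<sigma> \<and> posdef n \<sigma> \<and> \<sigma> \<noteq> rho}"
  then have h\<sigma>: "hermitian n \<sigma>" unfolding density_def psd_def by simp
  then have \<sigma>: "\<sigma> \<in> carrier_mat n n" by (rule hermitianD)
  define X where "X = inv_sqrt_rho * \<sigma> * inv_sqrt_rho"
  define Z where "Z = mlog n \<sigma> - log_rho"
  have hX: "hermitian n X" unfolding X_def by (rule hermitian_sandwich[OF h\<sigma> hermitian_inv_sqrt_rho])
  have hZ: "hermitian n Z" unfolding Z_def mlog_def by (intro hermitian_minus hermitian_matfun h\<sigma> hermitian_log_rho)
  let ?D = "rel_entropy n \<sigma> rho"
  have ratio: "mlsi_ratio L'' (heis n H (s * \<beta>) \<sigma>) = Re (corr_E n \<beta> H L'' X Z s) / ?D"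
    if "lindbladian n L''" "kms_symmetric n rho L''" for L'' s
    unfolding mlsi_ratio_def X_def Z_def rel_entropy_heis[OF h\<sigma>] entropy_prod_heis[OF that h\<sigma>, symmetric] ..
  note int = transfer[OF hX hZ, THEN conjunct1]
  have "mlsi_ratio L \<sigma> = Re (corr_E n \<beta> H L X Z 0) / ?D"
    using ratio[OF L, of 0] unfolding mult_zero_left heis_0[OF \<sigma>] .
  also have "\<dots> = (LINT u|lborel. g u * (Re (corr_E n \<beta> H L' X Z (- u)) / ?D))"
    unfolding transfer[OF hX hZ, THEN conjunct2] by (rule integral_Re_divide(2)[OF int])
  finally show "mlsi_ratio L \<sigma> = (LINT u|lborel. g u * mlsi_ratio L' (heis n H (- u * \<beta>) \<sigma>))"
    unfolding ratio[OF L'] .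
  show "integrable lborel (\<lambda>u. g u * mlsi_ratio L' (heis n H (- u * \<beta>) \<sigma>))"
    using integral_Re_divide(1)[OF int, of ?D] unfolding ratio[OF L'] .
next
  fix \<sigma> u assume "\<sigma> \<in> {\<sigma>. density n \<sigma> \<and> posdef n \<sigma> \<and> \<sigma> \<noteq> rho}"
  then show "heis n H (- u * \<beta>) \<sigma> \<in> {\<sigma>. density n \<sigma> \<and> posdef n \<sigma> \<and> \<sigma> \<noteq> rho}"
    using mlsi_domain_heis[of \<sigma> "- u * \<beta>"] by simp
qed

end

theorem lemma4:
  fixes n :: nat and H :: "complex mat" and \<beta> :: real
    and L :: "real \<Rightarrow> complex mat \<Rightarrow> complex mat"
    and f :: "real \<Rightarrow> real \<Rightarrow> real"
    and g :: "real \<Rightarrow> real \<Rightarrow> real \<Rightarrow> real"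
    and Einf :: "complex mat \<Rightarrow> complex mat \<Rightarrow> real \<Rightarrow> complex"
    and \<delta> \<delta>' :: real
  assumes n_pos: "n > 0"
    and H_herm: "hermitian n H"
    and beta_pos: "\<beta> > 0"
    and L_prop: "\<And>d. d \<ge> 0 \<Longrightarrow>
        lindbladian n (L d) \<and> primitive n (L d) \<and> kms_symmetric n (gibbs n \<beta> H) (L d)"
    and f_prop: "\<And>d. d \<ge> 0 \<Longrightarrow> integrable lborel (f d) \<and> (\<forall>r. f d r \<ge> 0)"
    and semigroup: "\<And>d d'. 0 \<le> d \<Longrightarrow> d \<le> d' \<Longrightarrow>
        (\<forall>r. g d d' r \<ge> 0) \<and> g d d' \<in> borel_measurable lborel \<and>
        (\<forall>s. ennreal (f d s) = (\<integral>\<^sup>+ r. ennreal (g d d' r * f d' (s - r)) \<partial>lborel))"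
    and E_conv: "\<And>X Y d. hermitian n X \<Longrightarrow> hermitian n Y \<Longrightarrow> d \<ge> 0 \<Longrightarrow>
        is_convolution (f d) (Einf X Y) (corr_E n \<beta> H (L d) X Y)"
    and d_nonneg: "0 \<le> \<delta>"
    and d_le: "\<delta> \<le> \<delta>'"
  shows "spectral_gap n (gibbs n \<beta> H) (L \<delta>)
           \<ge> l1_norm (g \<delta> \<delta>') * spectral_gap n (gibbs n \<beta> H) (L \<delta>')
       \<and> mlsi_const n (gibbs n \<beta> H) (L \<delta>)
           \<ge> l1_norm (g \<delta> \<delta>') * mlsi_const n (gibbs n \<beta> H) (L \<delta>')"
proof -
  obtain U d where "unitary n U" "H = unitary_diag n U (\<lambda>i. complex_of_real (d i))"
    using hermitian_unitary_diag_decomposition[OF H_herm] by blast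
  then interpret gibbs_setting n H \<beta> U d using n_pos by unfold_locales
  have d'_nonneg: "0 \<le> \<delta>'" using d_nonneg d_le by simp
  have g_nn: "\<forall>r. g \<delta> \<delta>' r \<ge> 0" and g_meas: "g \<delta> \<delta>' \<in> borel_measurable lborel"
    and factor: "\<forall>s. ennreal (f \<delta> s) = (\<integral>\<^sup>+ r. ennreal (g \<delta> \<delta>' r * f \<delta>' (s - r)) \<partial>lborel)"
    using semigroup[OF d_nonneg d_le] by auto
  have transfer: "integrable lborel (\<lambda>u. complex_of_real (g \<delta> \<delta>' u) * corr_E n \<beta> H (L \<delta>') X Y (- u)) \<and>
      corr_E n \<beta> H (L \<delta>) X Y 0
        = (LINT u|lborel. complex_of_real (g \<delta> \<delta>' u) * corr_E n \<beta> H (L \<delta>') X Y (- u))"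
    if "hermitian n X" "hermitian n Y" for X Y
    using convolution_factor_at_0[OF _ _ _ g_nn g_meas factor E_conv[OF that d_nonneg] E_conv[OF that d'_nonneg]]
      f_prop[OF d_nonneg] f_prop[OF d'_nonneg] by (auto intro: borel_measurable_integrable)
  show ?thesis
    using spectral_gap_ge_l1_norm_mult[OF g_nn g_meas transfer]
      mlsi_const_ge_l1_norm_mult[OF g_nn g_meas _ _ _ _ transfer] L_prop[OF d_nonneg] L_prop[OF d'_nonneg]
    by simp
qed
end
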